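(* Let $c_1\neq c_2$ be points in $[0,1]$ satisfying $$\frac13-\frac12(c_1+c_2)+c_1c_2=0,$$ and consider the scheme (EQRF2) $$y_{n+1}=e^{\tau A}y_n+\tau\varphi_1(\tau A)\alpha_{0,n}+\Gamma(1+r)\Bigl((t_n+\tau)^{1+r}\varphi_{1+r}\bigl((t_n+\tau)A\bigr)-t_n^{1+r}e^{\tau A}\varphi_{1+r}(t_nA)\Bigr)\alpha_{1,n},$$ $n=0,\dots,N-1$, started from the exact initial value $y_0$, where $$\alpha_{1,n}=\frac{h((t_n+c_2\tau)^r)-h((t_n+c_1\tau)^r)}{(t_n+c_2\tau)^r-(t_n+c_1\tau)^r},\qquad \alpha_{0,n}=h((t_n+c_1\tau)^r)-(t_n+c_1\tau)^r\alpha_{1,n}.$$ Assume $h$ is three times differentiable on $[0,\infty)$ with bounded derivatives $h',h'',h'''$, and that $h''(x)\in\mathcal{D}(A)$ for all $x\ge0$ with $x\mapsto Ah''(x)$ bounded. Then for all $N\in\mathbb{N}$ and $0\le n\le N$, $$\|y(t_n)-y_n\|\le C\tau^{1+2r},$$ where $C$ may depend on $T$ (and on $r,h,c_1,c_2$ and the semigroup) but not on $n$ or $\tau$.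
   Context: $(X,\|\cdot\|)$ is a Banach space and $A:\mathcal{D}(A)\subset X\to X$ is a linear operator generating a strongly continuous semigroup $\{e^{tA}\}_{t\ge0}$ on $X$. Fix $T>0$, $0<r<1$, $y_0\in X$ and $h:[0,\infty)\to X$. The problem is $y'(t)=Ay(t)+h(t^r)$, $y(0)=y_0$, $t\in[0,T]$, with (mild) solution $y(t)=e^{tA}y_0+\int_0^te^{(t-s)A}h(s^r)\,ds$. Time grid: $N\in\mathbb{N}$, $\tau=T/N$, $t_n=n\tau$. For $\lambda>0$ and $t\ge0$ the fractional $\varphi$ function is the bounded operator $\varphi_\lambda(tA)v=\frac{1}{\Gamma(\lambda)}\int_0^1e^{(1-\theta)tA}\theta^{\lambda-1}v\,d\theta$ ($v\in X$), $\Gamma$ being Euler's gamma function; in particular $\tau\varphi_1(\tau A)v=\int_0^\tau e^{(\tau-s)A}v\,ds$. Convention $0^{1+r}=0$. *)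

theory Defs
  imports "HOL-Analysis.Analysis"
begin

definition c0_semigroup :: "(real \<Rightarrow> 'a::banach \<Rightarrow> 'a) \<Rightarrow> bool" where
  "c0_semigroup S \<longleftrightarrow>
     (\<forall>t\<ge>0. bounded_linear (S t)) \<and>
     S 0 = id \<and>
     (\<forall>s t. s \<ge> 0 \<longrightarrow> t \<ge> 0 \<longrightarrow> S (s + t) = S s \<circ> S t) \<and>
     (\<forall>x. continuous_on {0..} (\<lambda>t. S t x))"

definition generates :: "('a::banach \<Rightarrow> 'a) \<Rightarrow> 'a set \<Rightarrow> (real \<Rightarrow> 'a \<Rightarrow> 'a) \<Rightarrow> bool" where
  "generates A D S \<longleftrightarrow> c0_semigroup S \<and>
     D = {x. \<exists>l. ((\<lambda>t. (1 / t) *\<^sub>R (S t x - x)) \<longlongrightarrow> l) (at_right 0)} \<and>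
     (\<forall>x\<in>D. ((\<lambda>t. (1 / t) *\<^sub>R (S t x - x)) \<longlongrightarrow> A x) (at_right 0))"

definition phi :: "(real \<Rightarrow> 'a::banach \<Rightarrow> 'a) \<Rightarrow> real \<Rightarrow> real \<Rightarrow> 'a \<Rightarrow> 'a" where
  "phi S lam t v = (1 / Gamma lam) *\<^sub>R
     integral {0..1} (\<lambda>\<theta>. S ((1 - \<theta>) * t) ((\<theta> powr (lam - 1)) *\<^sub>R v))"

definition mild_sol :: "(real \<Rightarrow> 'a::banach \<Rightarrow> 'a) \<Rightarrow> (real \<Rightarrow> 'a) \<Rightarrow> real \<Rightarrow> 'a \<Rightarrow> real \<Rightarrow> 'a" where
  "mild_sol S h r y0 t = S t y0 + integral {0..t} (\<lambda>s. S (t - s) (h (s powr r)))"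

definition alpha1 :: "(real \<Rightarrow> 'a::banach) \<Rightarrow> real \<Rightarrow> real \<Rightarrow> real \<Rightarrow> real \<Rightarrow> real \<Rightarrow> 'a" where
  "alpha1 h r c1 c2 tau tn =
     (1 / ((tn + c2 * tau) powr r - (tn + c1 * tau) powr r)) *\<^sub>R
       (h ((tn + c2 * tau) powr r) - h ((tn + c1 * tau) powr r))"

definition alpha0 :: "(real \<Rightarrow> 'a::banach) \<Rightarrow> real \<Rightarrow> real \<Rightarrow> real \<Rightarrow> real \<Rightarrow> real \<Rightarrow> 'a" where
  "alpha0 h r c1 c2 tau tn =
     h ((tn + c1 * tau) powr r) - ((tn + c1 * tau) powr r) *\<^sub>R alpha1 h r c1 c2 tau tn"

primrec eqrf2 :: "(real \<Rightarrow> 'a::banach \<Rightarrow> 'a) \<Rightarrow> (real \<Rightarrow> 'a) \<Rightarrow> real \<Rightarrow> real \<Rightarrow> real \<Rightarrow> real \<Rightarrow> 'a \<Rightarrow> nat \<Rightarrow> 'a" where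
  "eqrf2 S h r c1 c2 tau y0 0 = y0"
| "eqrf2 S h r c1 c2 tau y0 (Suc n) =
     (let tn = real n * tau;
          a0 = alpha0 h r c1 c2 tau tn;
          a1 = alpha1 h r c1 c2 tau tn
      in S tau (eqrf2 S h r c1 c2 tau y0 n)
         + tau *\<^sub>R phi S 1 tau a0
         + Gamma (1 + r) *\<^sub>R
             (((tn + tau) powr (1 + r)) *\<^sub>R phi S (1 + r) (tn + tau) a1
              - (tn powr (1 + r)) *\<^sub>R S tau (phi S (1 + r) tn a1)))"

end

theory Submission
  imports Defs
begin

text \<open>
  On a step [t_k, t_k + tau] the scheme integrates the variation-of-constants formula exactly after
  replacing h(s^r) by its linear interpolant in u = s^r at the nodes u_i = (t_k + c_i tau)^r. Hence
  the global error is a sum of local defects, integrals of e^((t_(k+1) - s)A) applied to the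
  interpolation residual, propagated by the uniformly bounded semigroup.

  On the first step the residual is O(tau^(2r)) because h is C^2. For k >= 1 let
  Delta = r t_k^(r-1) tau. A second-order Taylor expansion of h at t_k^r shows that the residual is
  (s^r - u_1)(s^r - u_2)/2 h''(t_k^r) + O(Delta^3), and linearizing s^r turns the product into
  Delta^2 (theta - c_1)(theta - c_2) + O(t_k^(2r-3) tau^3) with theta = (s - t_k)/tau. The condition
  on c_1, c_2 says exactly that (theta - c_1)(theta - c_2) has mean zero on [0,1], and
  h''(t_k^r) in D(A) gives e^(sigma A) h'' - h'' = O(sigma). So the k-th defect is
  O(tau^4 t_k^(2r-3)) = O(tau^(1+2r) k^(2r-3)), and these sum to O(tau^(1+2r)) since 2r - 3 < -1.
\<close>

section \<open>Strongly continuous semigroups\<close>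

lemma c0_semigroup_bounded_linear: "c0_semigroup S \<Longrightarrow> t \<ge> 0 \<Longrightarrow> bounded_linear (S t)"
  by (simp add: c0_semigroup_def)

lemma c0_semigroup_add: "c0_semigroup S \<Longrightarrow> s \<ge> 0 \<Longrightarrow> t \<ge> 0 \<Longrightarrow> S (s + t) x = S s (S t x)"
  by (simp add: c0_semigroup_def)

lemma c0_semigroup_zero: "c0_semigroup S \<Longrightarrow> S 0 x = x"
  by (simp add: c0_semigroup_def)

lemma bounded_linear_bound_of_ball_bound:
  fixes f :: "'a::real_normed_vector \<Rightarrow> 'b::real_normed_vector"
  assumes f: "bounded_linear f" and e: "e > 0" and k: "\<And>y. y \<in> ball x0 e \<Longrightarrow> norm (f y) \<le> k"
  shows "norm (f x) \<le> 4 * k / e * norm x"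
proof (cases "x = 0")
  case True
  then show ?thesis using f by (simp add: linear_simps)
next
  case False
  define c where "c = e / (2 * norm x)"
  have c: "c > 0" using False e by (simp add: c_def)
  have "norm (c *\<^sub>R x) < e" using False e by (simp add: c_def)
  then have "norm (f (x0 + c *\<^sub>R x)) \<le> k" "norm (f x0) \<le> k"
    using e by (auto simp: dist_norm intro!: k)
  moreover have "c *\<^sub>R f x = f (x0 + c *\<^sub>R x) - f x0" using f by (simp add: linear_simps)
  ultimately have "c * norm (f x) \<le> 2 * k"
    using c norm_triangle_ineq4[of "f (x0 + c *\<^sub>R x)" "f x0"] by (metis norm_scaleR abs_of_pos mult_2 order_trans add_mono)
  then show ?thesis using e False by (simp add: c_def field_simps)
qed

lemma uniform_boundedness:
  fixes T :: "'i \<Rightarrow> 'a::banach \<Rightarrow> 'b::real_normed_vector"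
  assumes lin: "\<And>i. i \<in> I \<Longrightarrow> bounded_linear (T i)"
    and pointwise: "\<And>x. \<exists>B. \<forall>i\<in>I. norm (T i x) \<le> B"
  shows "\<exists>M>0. \<forall>i\<in>I. \<forall>x. norm (T i x) \<le> M * norm x"
proof -
  define F where "F k = {x. \<forall>i\<in>I. norm (T i x) \<le> real k}" for k :: nat
  have "closed (F k)" for k
  proof -
    have "closed {x. norm (T i x) \<le> real k}" if "i \<in> I" for i
      using linear_continuous_on[OF lin[OF that]]
      by (intro closed_Collect_le continuous_intros) (auto intro: continuous_on_compose2)
    moreover have "F k = (\<Inter>i\<in>I. {x. norm (T i x) \<le> real k})" by (auto simp: F_def)
    ultimately show ?thesis by auto
  qed
  moreover have "(\<Union>k. F k) = UNIV"
  proof safe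
    fix x
    obtain B where "\<forall>i\<in>I. norm (T i x) \<le> B" using pointwise by blast
    moreover obtain k :: nat where "B \<le> real k" using real_arch_simple by blast
    ultimately have "x \<in> F k" by (force simp: F_def)
    then show "x \<in> (\<Union>k. F k)" by blast
  qed auto
  ultimately have "\<exists>k. interior (F k) \<noteq> {}"
    using Baire_category_alt[of euclidean "range F"]
    by (auto simp: completely_metrizable_space_euclidean)
  then obtain k x0 where "x0 \<in> interior (F k)" by blast
  then obtain e where e: "e > 0" "ball x0 e \<subseteq> F k"
    by (meson interior_subset open_contains_ball open_interior subset_trans)
  have "norm (T i x) \<le> 4 * (real k + 1) / e * norm x" if "i \<in> I" for i x
  proof -
    have "norm (T i x) \<le> 4 * real k / e * norm x"
      by (rule bounded_linear_bound_of_ball_bound[OF lin[OF that] e(1)]) (use e that in \<open>auto simp: F_def\<close>)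
    also have "\<dots> \<le> 4 * (real k + 1) / e * norm x"
      using e by (intro mult_right_mono divide_right_mono) auto
    finally show ?thesis .
  qed
  moreover have "4 * (real k + 1) / e > 0" using e by simp
  ultimately show ?thesis by blast
qed

lemma c0_semigroup_uniform_bound:
  fixes S :: "real \<Rightarrow> 'a::banach \<Rightarrow> 'a"
  assumes S: "c0_semigroup S" and L: "L \<ge> 0"
  shows "\<exists>M>0. \<forall>t\<in>{0..L}. \<forall>x. norm (S t x) \<le> M * norm x"
proof (rule uniform_boundedness)
  show "bounded_linear (S t)" if "t \<in> {0..L}" for t
    using S that by (simp add: c0_semigroup_def)
  fix x
  have "continuous_on {0..L} (\<lambda>t. S t x)"
    using S unfolding c0_semigroup_def by (auto intro: continuous_on_subset)
  then have "compact ((\<lambda>t. S t x) ` {0..L})" by (intro compact_continuous_image) auto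
  then show "\<exists>B. \<forall>t\<in>{0..L}. norm (S t x) \<le> B"
    using compact_imp_bounded bounded_iff by (metis image_eqI)
qed

lemma continuous_on_c0_semigroup:
  fixes S :: "real \<Rightarrow> 'a::banach \<Rightarrow> 'a"
  assumes S: "c0_semigroup S" and g: "continuous_on K g" and f: "continuous_on K f"
    and gK: "g ` K \<subseteq> {0..L}"
  shows "continuous_on K (\<lambda>s. S (g s) (f s))"
  unfolding continuous_on_def
proof
  fix s0 assume s0: "s0 \<in> K"
  obtain M where M: "\<forall>t\<in>{0..max L 0}. \<forall>x. norm (S t x) \<le> M * norm x"
    using c0_semigroup_uniform_bound[OF S, of "max L 0"] by auto
  have lin: "S (g s) (f s) = S (g s) (f s0) + S (g s) (f s - f s0)" if "s \<in> K" for s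
    using c0_semigroup_bounded_linear[OF S, of "g s"] gK that by (auto simp: linear_simps)
  have "((\<lambda>s. S (g s) (f s0)) \<longlongrightarrow> S (g s0) (f s0)) (at s0 within K)"
  proof -
    have "continuous_on {0..} (\<lambda>t. S t (f s0))" using S by (simp add: c0_semigroup_def)
    then have "continuous_on K (\<lambda>s. S (g s) (f s0))"
      by (rule continuous_on_compose2[OF _ g]) (use gK in auto)
    then show ?thesis using s0 by (simp add: continuous_on_def)
  qed
  moreover have "((\<lambda>s. S (g s) (f s - f s0)) \<longlongrightarrow> 0) (at s0 within K)"
  proof (rule Lim_null_comparison)
    show "\<forall>\<^sub>F s in at s0 within K. norm (S (g s) (f s - f s0)) \<le> M * norm (f s - f s0)"
      unfolding eventually_at_filter by (intro always_eventually) (use gK M in \<open>auto simp: image_subset_iff\<close>)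
    have "((\<lambda>s. f s - f s0) \<longlongrightarrow> 0) (at s0 within K)"
      using f s0 by (simp add: continuous_on_def LIM_zero)
    then show "((\<lambda>s. M * norm (f s - f s0)) \<longlongrightarrow> 0) (at s0 within K)"
      using tendsto_mult_right_zero tendsto_norm_zero by blast
  qed
  ultimately have "((\<lambda>s. S (g s) (f s0) + S (g s) (f s - f s0)) \<longlongrightarrow> S (g s0) (f s0)) (at s0 within K)"
    using tendsto_add by fastforce
  moreover have "\<forall>\<^sub>F s in at s0 within K. S (g s) (f s0) + S (g s) (f s - f s0) = S (g s) (f s)"
    using lin by (auto simp: eventually_at_filter)
  ultimately show "((\<lambda>s. S (g s) (f s)) \<longlongrightarrow> S (g s0) (f s0)) (at s0 within K)"
    by (simp add: tendsto_cong)
qed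

lemma c0_semigroup_linearization_bound:
  fixes S :: "real \<Rightarrow> 'a::banach \<Rightarrow> 'a" and w v :: 'a
  assumes S: "c0_semigroup S" and M: "\<forall>t\<in>{0..L}. \<forall>x. norm (S t x) \<le> M * norm x"
    and y: "0 < y" "y < L" and t: "0 < t" "t < L" and yt: "y \<noteq> t"
  defines "d \<equiv> \<lambda>h. (1 / h) *\<^sub>R (S h w - w)"
  shows "norm ((S y w - S t w) - (y - t) *\<^sub>R S t v) / \<bar>y - t\<bar>
         \<le> M * norm (d \<bar>y - t\<bar> - v) + norm (S t v - S (min y t) v)"
proof (cases "t < y")
  case True
  define h where "h = y - t"
  have h: "h > 0" "y = t + h" using True by (auto simp: h_def)
  have "(S (t + h) w - S t w) - h *\<^sub>R S t v = h *\<^sub>R S t (d h - v)"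
    using c0_semigroup_add[OF S, of t h w] c0_semigroup_bounded_linear[OF S, of t] h t
    by (simp add: d_def linear_simps scaleR_diff_right)
  moreover have "norm (S t (d h - v)) \<le> M * norm (d h - v)" using M t by auto
  ultimately show ?thesis using h by simp
next
  case False
  define h where "h = t - y"
  have h: "h > 0" "t = y + h" using False yt by (auto simp: h_def)
  have "(S y w - S (y + h) w) + h *\<^sub>R S (y + h) v = h *\<^sub>R (S y (v - d h) + (S (y + h) v - S y v))"
    using c0_semigroup_add[OF S, of y h w] c0_semigroup_bounded_linear[OF S, of y] h y
    by (simp add: d_def linear_simps scaleR_diff_right algebra_simps)
  moreover have "norm (S y (v - d h)) \<le> M * norm (d h - v)"
    using M y by (simp add: norm_minus_commute)
  ultimately have "norm ((S y w - S (y + h) w) + h *\<^sub>R S (y + h) v) / h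
      \<le> M * norm (d h - v) + norm (S (y + h) v - S y v)"
    using h norm_triangle_ineq[of "S y (v - d h)" "S (y + h) v - S y v"] by simp
  then show ?thesis using h by (simp add: norm_minus_commute)
qed

lemma generator_has_vector_derivative:
  fixes S :: "real \<Rightarrow> 'a::banach \<Rightarrow> 'a"
  assumes gen: "generates A D S" and M: "\<forall>t\<in>{0..L}. \<forall>x. norm (S t x) \<le> M * norm x"
    and w: "w \<in> D" and t: "0 < t" "t < L"
  shows "((\<lambda>s. S s w) has_vector_derivative S t (A w)) (at t)"
proof -
  have S: "c0_semigroup S" using gen by (simp add: generates_def)
  define d where "d h = (1 / h) *\<^sub>R (S h w - w)" for h
  have "(d \<longlongrightarrow> A w) (at_right 0)"
    using gen w unfolding generates_def d_def by blast
  moreover have "filterlim (\<lambda>y. \<bar>y - t\<bar>) (at_right 0) (at t)"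
    unfolding filterlim_at
    by (auto simp: eventually_at_filter intro!: tendsto_eq_intros)
  ultimately have "((\<lambda>y. d \<bar>y - t\<bar> - A w) \<longlongrightarrow> 0) (at t)"
    using filterlim_compose LIM_zero by blast
  moreover have "((\<lambda>y. S t (A w) - S (min y t) (A w)) \<longlongrightarrow> 0) (at t)"
  proof -
    have "continuous_on {0<..} (\<lambda>s. S s (A w))" using S
      by (auto simp: c0_semigroup_def intro: continuous_on_subset)
    then have "isCont (\<lambda>s. S s (A w)) t" using t by (simp add: continuous_on_eq_continuous_at)
    moreover have "((\<lambda>y. min y t) \<longlongrightarrow> t) (at t)"
      using tendsto_min[OF tendsto_ident_at tendsto_const, of t t] by simp
    ultimately have "((\<lambda>y. S (min y t) (A w)) \<longlongrightarrow> S t (A w)) (at t)"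
      by (rule isCont_tendsto_compose)
    from tendsto_diff[OF tendsto_const this, of "S t (A w)"] show ?thesis by simp
  qed
  ultimately have "((\<lambda>y. M * norm (d \<bar>y - t\<bar> - A w) + norm (S t (A w) - S (min y t) (A w))) \<longlongrightarrow> 0) (at t)"
    by (intro tendsto_add_zero tendsto_mult_right_zero tendsto_norm_zero)
  then have "((\<lambda>y. norm ((S y w - S t w) - (y - t) *\<^sub>R S t (A w)) / norm (y - t)) \<longlongrightarrow> 0) (at t)"
  proof (rule Lim_null_comparison[rotated])
    have "\<forall>\<^sub>F y in at t. y \<in> {0<..<L}"
      using t by (intro eventually_at_in_open') auto
    then show "\<forall>\<^sub>F y in at t. norm (norm ((S y w - S t w) - (y - t) *\<^sub>R S t (A w)) / norm (y - t))
        \<le> M * norm (d \<bar>y - t\<bar> - A w) + norm (S t (A w) - S (min y t) (A w))"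
      unfolding eventually_at_filter d_def
      by (rule eventually_mono) (use c0_semigroup_linearization_bound[OF S M _ _ t] in auto)
  qed
  then show ?thesis
    unfolding has_vector_derivative_def has_derivative_iff_norm
    by (auto intro: bounded_linear_scaleR_left)
qed

lemma generator_semigroup_diff_bound:
  fixes S :: "real \<Rightarrow> 'a::banach \<Rightarrow> 'a"
  assumes gen: "generates A D S" and M: "\<forall>t\<in>{0..L}. \<forall>x. norm (S t x) \<le> M * norm x"
    and w: "w \<in> D" and \<sigma>: "0 \<le> \<sigma>" "\<sigma> < L"
  shows "norm (S \<sigma> w - w) \<le> M * norm (A w) * \<sigma>"
proof -
  have S: "c0_semigroup S" using gen by (simp add: generates_def)
  show ?thesis
  proof (cases "\<sigma> = 0")
    case True
    then show ?thesis by (simp add: c0_semigroup_zero[OF S])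
  next
    case False
    have "norm (S \<sigma> w - S 0 w) \<le> M * norm (A w) * \<sigma> - M * norm (A w) * 0"
    proof (rule differentiable_bound_general[where f' = "\<lambda>x. S x (A w)" and \<phi>' = "\<lambda>x. M * norm (A w)"])
      show "0 < \<sigma>" using False \<sigma> by simp
      show "continuous_on {0..\<sigma>} (\<lambda>t. S t w)" using S
        by (auto simp: c0_semigroup_def intro: continuous_on_subset)
      fix x assume x: "0 < x" "x < \<sigma>"
      show "((\<lambda>t. S t w) has_vector_derivative S x (A w)) (at x)"
        by (rule generator_has_vector_derivative[OF gen M w]) (use x \<sigma> in auto)
      show "norm (S x (A w)) \<le> M * norm (A w)" using M x \<sigma> by auto
    qed (auto intro!: continuous_intros derivative_eq_intros)
    then show ?thesis by (simp add: c0_semigroup_zero[OF S])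
  qed
qed

lemma c0_semigroup_integral_shift:
  fixes S :: "real \<Rightarrow> 'a::banach \<Rightarrow> 'a"
  assumes S: "c0_semigroup S" and a: "a \<ge> 0" and tau: "tau \<ge> 0" and f: "continuous_on {0..a} f"
  shows "S tau (integral {0..a} (\<lambda>s. S (a - s) (f s))) = integral {0..a} (\<lambda>s. S (a + tau - s) (f s))"
proof -
  have "continuous_on {0..a} (\<lambda>s. S (a - s) (f s))"
    by (rule continuous_on_c0_semigroup[OF S _ f, of _ a]) (auto intro!: continuous_intros)
  then have "S tau (integral {0..a} (\<lambda>s. S (a - s) (f s))) = integral {0..a} (\<lambda>s. S tau (S (a - s) (f s)))"
    using integral_linear[OF integrable_continuous_real c0_semigroup_bounded_linear[OF S tau]]
    by (simp add: o_def)
  also have "\<dots> = integral {0..a} (\<lambda>s. S (a + tau - s) (f s))"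
  proof (rule integral_cong)
    fix s assume "s \<in> {0..a}"
    then show "S tau (S (a - s) (f s)) = S (a + tau - s) (f s)"
      using c0_semigroup_add[OF S, of tau "a - s" "f s"] tau by (simp add: algebra_simps)
  qed
  finally show ?thesis .
qed

lemma norm_integral_c0_semigroup_le:
  fixes S :: "real \<Rightarrow> 'a::banach \<Rightarrow> 'a"
  assumes S: "c0_semigroup S" and M: "\<forall>t\<in>{0..L}. \<forall>x. norm (S t x) \<le> M * norm x" "M \<ge> 0"
    and tau: "0 \<le> tau" "tau \<le> L" and f: "continuous_on {a..a+tau} f"
    and B: "\<And>s. s \<in> {a..a+tau} \<Longrightarrow> norm (f s) \<le> B"
  shows "norm (integral {a..a+tau} (\<lambda>s. S (a + tau - s) (f s))) \<le> tau * (M * B)"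
proof -
  have "continuous_on {a..a+tau} (\<lambda>s. S (a + tau - s) (f s))"
    by (rule continuous_on_c0_semigroup[OF S _ f, where L = tau]) (auto intro!: continuous_intros)
  then have hi: "((\<lambda>s. S (a + tau - s) (f s)) has_integral integral {a..a+tau} (\<lambda>s. S (a + tau - s) (f s)))
      (cbox a (a + tau))"
    using integrable_continuous_real integrable_integral by auto
  moreover have bnd: "norm (S (a + tau - s) (f s)) \<le> M * B" if "s \<in> cbox a (a + tau)" for s
  proof -
    have "norm (S (a + tau - s) (f s)) \<le> M * norm (f s)" using M that tau by auto
    also have "\<dots> \<le> M * B" using B[of s] that M(2) by (intro mult_left_mono) auto
    finally show ?thesis .
  qed
  moreover have "0 \<le> M * B" using M(2) B[of a] tau by (simp add: order_trans[OF norm_ge_zero])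
  from has_integral_bound[OF this hi bnd] show ?thesis using tau by (simp add: mult.commute)
qed

section \<open>One step of the exact solution and of EQRF2\<close>

lemma Gamma_phi_integral:
  fixes S :: "real \<Rightarrow> 'a::banach \<Rightarrow> 'a"
  assumes S: "c0_semigroup S" and t: "t \<ge> 0" and r: "r > 0"
  shows "Gamma (1 + r) *\<^sub>R ((t powr (1 + r)) *\<^sub>R phi S (1 + r) t v)
         = integral {0..t} (\<lambda>s. S (t - s) ((s powr r) *\<^sub>R v))"
proof (cases "t = 0")
  case False
  then have t0: "t > 0" using t by simp
  define g where "g s = S (t - s) ((s powr r) *\<^sub>R v)" for s
  define I where "I = integral {0..t} g"
  have "continuous_on {0..t} g" unfolding g_def
    by (rule continuous_on_c0_semigroup[OF S, of _ _ _ t])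
       (auto intro!: continuous_intros continuous_on_powr' simp: r)
  then have "(g has_integral I) {0..t}"
    unfolding I_def using integrable_continuous_real integrable_integral by blast
  then have "((\<lambda>x. g (t * x)) has_integral ((1 / t) *\<^sub>R I)) {0..1}"
    using has_integral_affinity'[of g I 0 t t 0] t0 by (simp add: divide_inverse_commute)
  moreover have "g (t * x) = (t powr r) *\<^sub>R S ((1 - x) * t) ((x powr (1 + r - 1)) *\<^sub>R v)"
    if "x \<in> {0..1}" for x
  proof -
    have "bounded_linear (S ((1 - x) * t))" using S that t by (simp add: c0_semigroup_def)
    moreover have "(t * x) powr r = t powr r * x powr r" "t - t * x = (1 - x) * t"
      using that t by (simp_all add: powr_mult algebra_simps)
    ultimately show ?thesis by (simp add: g_def linear_simps)
  qed
  ultimately have "((\<lambda>x. (t powr r) *\<^sub>R S ((1 - x) * t) ((x powr (1 + r - 1)) *\<^sub>R v))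
      has_integral ((1 / t) *\<^sub>R I)) {0..1}"
    by (rule has_integral_eq[rotated]) simp
  from has_integral_cmul[OF this, of "1 / t powr r"]
  have "integral {0..1} (\<lambda>x. S ((1 - x) * t) ((x powr (1 + r - 1)) *\<^sub>R v))
      = (1 / t powr r) *\<^sub>R ((1 / t) *\<^sub>R I)"
    using t0 by (simp add: integral_unique)
  moreover have "Gamma (1 + r) > 0" by (rule Gamma_real_pos) (use r in simp)
  ultimately show ?thesis
    using t0 unfolding phi_def I_def g_def by (simp add: powr_add scaleR_scaleR)
qed simp

lemma phi_1_integral:
  fixes S :: "real \<Rightarrow> 'a::banach \<Rightarrow> 'a"
  assumes S: "c0_semigroup S" and tau: "tau > 0"
  shows "tau *\<^sub>R phi S 1 tau v = integral {a..a+tau} (\<lambda>s. S (a + tau - s) v)"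
proof -
  define g where "g s = S (a + tau - s) v" for s
  define I where "I = integral {a..a+tau} g"
  have "continuous_on {a..a+tau} g" unfolding g_def
    by (rule continuous_on_c0_semigroup[OF S, of _ _ _ tau]) (auto intro!: continuous_intros)
  then have "(g has_integral I) {a..a+tau}"
    unfolding I_def using integrable_continuous_real integrable_integral by blast
  then have "((\<lambda>x. g (tau * x + a)) has_integral ((1 / tau) *\<^sub>R I)) {0..1}"
    using has_integral_affinity'[of g I a "a+tau" tau a] tau by (simp add: divide_inverse_commute)
  then have "((\<lambda>x. S ((1 - x) * tau) ((x powr (1 - 1)) *\<^sub>R v)) has_integral ((1 / tau) *\<^sub>R I)) {0..1}"
    by (rule has_integral_spike_finite[of "{0}", rotated 2]) (auto simp: g_def algebra_simps)
  then show ?thesis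
    using tau unfolding phi_def I_def g_def by (simp add: integral_unique)
qed

lemma mild_sol_step:
  fixes S :: "real \<Rightarrow> 'a::banach \<Rightarrow> 'a"
  assumes S: "c0_semigroup S" and a: "a \<ge> 0" and tau: "tau > 0" and r: "r > 0"
    and hc: "continuous_on {0..} h"
  shows "mild_sol S h r y0 (a + tau) = S tau (mild_sol S h r y0 a)
           + integral {a..a+tau} (\<lambda>s. S (a + tau - s) (h (s powr r)))"
proof -
  have hr: "continuous_on {0..b} (\<lambda>s. h (s powr r))" for b
    by (rule continuous_on_compose2[OF hc]) (auto intro!: continuous_intros continuous_on_powr' simp: r)
  have cg: "continuous_on {0..a+tau} (\<lambda>s. S (a + tau - s) (h (s powr r)))"
    by (rule continuous_on_c0_semigroup[OF S _ hr, where L="a+tau"]) (auto intro!: continuous_intros)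
  have split: "integral {0..a+tau} (\<lambda>s. S (a + tau - s) (h (s powr r)))
      = integral {0..a} (\<lambda>s. S (a + tau - s) (h (s powr r)))
        + integral {a..a+tau} (\<lambda>s. S (a + tau - s) (h (s powr r)))"
    using Henstock_Kurzweil_Integration.integral_combine[OF a _ integrable_continuous_real[OF cg]] tau
    by simp
  have "S tau (mild_sol S h r y0 a)
      = S tau (S a y0) + S tau (integral {0..a} (\<lambda>s. S (a - s) (h (s powr r))))"
    unfolding mild_sol_def using c0_semigroup_bounded_linear[OF S, of tau] tau
    by (simp add: linear_simps)
  also have "\<dots> = S (a + tau) y0 + integral {0..a} (\<lambda>s. S (a + tau - s) (h (s powr r)))"
    using c0_semigroup_add[OF S, of tau a y0] c0_semigroup_integral_shift[OF S a _ hr, of tau] tau a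
    by (simp add: add.commute)
  finally show ?thesis unfolding mild_sol_def split by simp
qed

lemma eqrf2_increment_integral:
  fixes S :: "real \<Rightarrow> 'a::banach \<Rightarrow> 'a"
  assumes S: "c0_semigroup S" and a: "a \<ge> 0" and tau: "tau > 0" and r: "r > 0"
  shows "tau *\<^sub>R phi S 1 tau a0 + Gamma (1 + r) *\<^sub>R
             (((a + tau) powr (1 + r)) *\<^sub>R phi S (1 + r) (a + tau) a1
              - (a powr (1 + r)) *\<^sub>R S tau (phi S (1 + r) a a1))
         = integral {a..a+tau} (\<lambda>s. S (a + tau - s) (a0 + (s powr r) *\<^sub>R a1))"
proof -
  have pr: "continuous_on {0..b} (\<lambda>s. (s powr r) *\<^sub>R a1)" for b
    by (auto intro!: continuous_intros continuous_on_powr' simp: r)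
  have cg: "continuous_on {0..a+tau} (\<lambda>s. S (a + tau - s) ((s powr r) *\<^sub>R a1))"
    by (rule continuous_on_c0_semigroup[OF S _ pr, where L="a+tau"]) (auto intro!: continuous_intros)
  have cg0: "continuous_on {a..a+tau} (\<lambda>s. S (a + tau - s) a0)"
    by (rule continuous_on_c0_semigroup[OF S, where L="tau"]) (auto intro!: continuous_intros)
  have bl: "bounded_linear (S tau)" using S tau by (simp add: c0_semigroup_def)
  have "Gamma (1 + r) *\<^sub>R ((a powr (1 + r)) *\<^sub>R S tau (phi S (1 + r) a a1))
       = S tau (Gamma (1 + r) *\<^sub>R ((a powr (1 + r)) *\<^sub>R phi S (1 + r) a a1))"
    using bl by (simp add: linear_simps)
  also have "\<dots> = integral {0..a} (\<lambda>s. S (a + tau - s) ((s powr r) *\<^sub>R a1))"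
    using Gamma_phi_integral[OF S a r] c0_semigroup_integral_shift[OF S a _ pr] tau by simp
  finally have past: "Gamma (1 + r) *\<^sub>R ((a powr (1 + r)) *\<^sub>R S tau (phi S (1 + r) a a1))
     = integral {0..a} (\<lambda>s. S (a + tau - s) ((s powr r) *\<^sub>R a1))" .
  have split: "integral {0..a+tau} (\<lambda>s. S (a + tau - s) ((s powr r) *\<^sub>R a1))
      = integral {0..a} (\<lambda>s. S (a + tau - s) ((s powr r) *\<^sub>R a1))
        + integral {a..a+tau} (\<lambda>s. S (a + tau - s) ((s powr r) *\<^sub>R a1))"
    using Henstock_Kurzweil_Integration.integral_combine[OF a _ integrable_continuous_real[OF cg]] tau
    by simp
  have "integral {a..a+tau} (\<lambda>s. S (a + tau - s) (a0 + (s powr r) *\<^sub>R a1))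
      = integral {a..a+tau} (\<lambda>s. S (a + tau - s) a0 + S (a + tau - s) ((s powr r) *\<^sub>R a1))"
    using c0_semigroup_bounded_linear[OF S] by (intro integral_cong) (simp add: linear_simps)
  also have "\<dots> = integral {a..a+tau} (\<lambda>s. S (a + tau - s) a0)
      + integral {a..a+tau} (\<lambda>s. S (a + tau - s) ((s powr r) *\<^sub>R a1))"
    using cg0 continuous_on_subset[OF cg, of "{a..a+tau}"] a
    by (intro integral_add integrable_continuous_real) auto
  finally show ?thesis
    using Gamma_phi_integral[OF S _ r, of "a+tau" a1] a tau
    unfolding scaleR_diff_right phi_1_integral[OF S tau, where a = a] past split by simp
qed

definition interp_residual :: "(real \<Rightarrow> 'a::banach) \<Rightarrow> real \<Rightarrow> real \<Rightarrow> real \<Rightarrow> real \<Rightarrow> real \<Rightarrow> real \<Rightarrow> 'a" where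
  "interp_residual h r c1 c2 tau a s =
     h (s powr r) - (alpha0 h r c1 c2 tau a + (s powr r) *\<^sub>R alpha1 h r c1 c2 tau a)"

definition local_defect :: "(real \<Rightarrow> 'a::banach \<Rightarrow> 'a) \<Rightarrow> (real \<Rightarrow> 'a) \<Rightarrow> real \<Rightarrow> real \<Rightarrow> real \<Rightarrow> real \<Rightarrow> real \<Rightarrow> 'a" where
  "local_defect S h r c1 c2 tau a =
     integral {a..a+tau} (\<lambda>s. S (a + tau - s) (interp_residual h r c1 c2 tau a s))"

lemma continuous_on_interp_residual:
  assumes hc: "continuous_on {0..} h" and r: "r > 0" and a: "a \<ge> 0"
  shows "continuous_on {a..b} (interp_residual h r c1 c2 tau a)"
proof -
  have "continuous_on {a..b} (\<lambda>s. s powr r)"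
    using a by (auto intro!: continuous_intros continuous_on_powr' simp: r)
  moreover from this have "continuous_on {a..b} (\<lambda>s. h (s powr r))"
    by (rule continuous_on_compose2[OF hc]) (use a in auto)
  ultimately show ?thesis unfolding interp_residual_def
    by (intro continuous_on_diff continuous_on_add continuous_on_scaleR continuous_on_const)
qed

lemma continuous_on_propagated_interp_residual:
  fixes S :: "real \<Rightarrow> 'a::banach \<Rightarrow> 'a"
  assumes S: "c0_semigroup S" and hc: "continuous_on {0..} h" and r: "r > 0" and a: "a \<ge> 0"
  shows "continuous_on {a..a+tau} (\<lambda>s. S (a + tau - s) (interp_residual h r c1 c2 tau a s))"
  by (rule continuous_on_c0_semigroup[OF S _ continuous_on_interp_residual[OF hc r a], where L = tau])
     (auto intro!: continuous_intros)

lemma eqrf2_error_step: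
  fixes S :: "real \<Rightarrow> 'a::banach \<Rightarrow> 'a"
  assumes S: "c0_semigroup S" and tau: "tau > 0" and r: "r > 0" and hc: "continuous_on {0..} h"
  shows "mild_sol S h r y0 (real (Suc n) * tau) - eqrf2 S h r c1 c2 tau y0 (Suc n)
       = S tau (mild_sol S h r y0 (real n * tau) - eqrf2 S h r c1 c2 tau y0 n)
         + local_defect S h r c1 c2 tau (real n * tau)"
proof -
  define a where "a = real n * tau"
  define a0 where "a0 = alpha0 h r c1 c2 tau a"
  define a1 where "a1 = alpha1 h r c1 c2 tau a"
  have a: "a \<ge> 0" "real (Suc n) * tau = a + tau" using tau by (simp_all add: a_def algebra_simps)
  have hr: "continuous_on {a..a+tau} (\<lambda>s. h (s powr r))"
    by (rule continuous_on_compose2[OF hc]) (use a in \<open>auto intro!: continuous_intros continuous_on_powr' simp: r\<close>)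
  have "continuous_on {a..a+tau} (\<lambda>s. S (a + tau - s) (h (s powr r)))"
    by (rule continuous_on_c0_semigroup[OF S _ hr, where L = tau]) (auto intro!: continuous_intros)
  moreover have "continuous_on {a..a+tau} (\<lambda>s. S (a + tau - s) (a0 + (s powr r) *\<^sub>R a1))"
    by (rule continuous_on_c0_semigroup[OF S, where L = tau])
       (use a in \<open>auto intro!: continuous_intros continuous_on_powr' simp: r\<close>)
  ultimately have "integral {a..a+tau} (\<lambda>s. S (a + tau - s) (h (s powr r)))
        - integral {a..a+tau} (\<lambda>s. S (a + tau - s) (a0 + (s powr r) *\<^sub>R a1))
      = integral {a..a+tau} (\<lambda>s. S (a + tau - s) (h (s powr r)) - S (a + tau - s) (a0 + (s powr r) *\<^sub>R a1))"
    by (intro integral_diff[symmetric] integrable_continuous_real)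
  also have "\<dots> = local_defect S h r c1 c2 tau a"
    unfolding local_defect_def interp_residual_def a0_def a1_def
    using c0_semigroup_bounded_linear[OF S] by (intro integral_cong) (simp add: linear_simps)
  finally have defect: "integral {a..a+tau} (\<lambda>s. S (a + tau - s) (h (s powr r)))
        - integral {a..a+tau} (\<lambda>s. S (a + tau - s) (a0 + (s powr r) *\<^sub>R a1))
      = local_defect S h r c1 c2 tau a" .
  have "eqrf2 S h r c1 c2 tau y0 (Suc n) = S tau (eqrf2 S h r c1 c2 tau y0 n)
      + (tau *\<^sub>R phi S 1 tau a0 + Gamma (1 + r) *\<^sub>R
             (((a + tau) powr (1 + r)) *\<^sub>R phi S (1 + r) (a + tau) a1
              - (a powr (1 + r)) *\<^sub>R S tau (phi S (1 + r) a a1)))"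
    by (simp add: Let_def a_def a0_def a1_def)
  then have scheme: "eqrf2 S h r c1 c2 tau y0 (Suc n) = S tau (eqrf2 S h r c1 c2 tau y0 n)
      + integral {a..a+tau} (\<lambda>s. S (a + tau - s) (a0 + (s powr r) *\<^sub>R a1))"
    by (simp only: eqrf2_increment_integral[OF S a(1) tau r])
  have "S tau (mild_sol S h r y0 a - eqrf2 S h r c1 c2 tau y0 n)
      = S tau (mild_sol S h r y0 a) - S tau (eqrf2 S h r c1 c2 tau y0 n)"
    using c0_semigroup_bounded_linear[OF S, of tau] tau by (simp add: linear_simps)
  then show ?thesis
    unfolding a_def[symmetric] a(2) mild_sol_step[OF S a(1) tau r hc] scheme defect[symmetric]
    by (simp only: add_diff_add)
qed

lemma c0_semigroup_recursion_sum:
  fixes S :: "real \<Rightarrow> 'a::banach \<Rightarrow> 'a"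
  assumes S: "c0_semigroup S" and tau: "tau \<ge> 0" and e0: "e 0 = 0"
    and es: "\<And>m. e (Suc m) = S tau (e m) + d m"
  shows "e n = (\<Sum>k<n. S (real (n - 1 - k) * tau) (d k))"
proof (induction n)
  case (Suc n)
  have shift: "S tau (S (real (n - 1 - k) * tau) x) = S (real (n - k) * tau) x" if "k < n" for k x
  proof -
    have "real (n - k) * tau = tau + real (n - 1 - k) * tau"
      using that by (simp add: of_nat_diff algebra_simps)
    then show ?thesis using c0_semigroup_add[OF S, of tau "real (n - 1 - k) * tau" x] tau by simp
  qed
  then have "S tau (\<Sum>k<n. S (real (n - 1 - k) * tau) (d k)) = (\<Sum>k<n. S (real (n - k) * tau) (d k))"
    unfolding linear_sum[OF bounded_linear.linear[OF c0_semigroup_bounded_linear[OF S tau]]]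
    by (intro sum.cong refl) (simp add: shift)
  then show ?case using es Suc c0_semigroup_zero[OF S] by simp
qed (simp add: e0)

lemma eqrf2_error_sum:
  fixes S :: "real \<Rightarrow> 'a::banach \<Rightarrow> 'a"
  assumes S: "c0_semigroup S" and tau: "tau > 0" and r: "r > 0" and hc: "continuous_on {0..} h"
  shows "mild_sol S h r y0 (real n * tau) - eqrf2 S h r c1 c2 tau y0 n
       = (\<Sum>k<n. S (real (n - 1 - k) * tau) (local_defect S h r c1 c2 tau (real k * tau)))"
  by (rule c0_semigroup_recursion_sum[OF S, where e = "\<lambda>n. mild_sol S h r y0 (real n * tau) - eqrf2 S h r c1 c2 tau y0 n"])
     (use tau eqrf2_error_step[OF S tau r hc] in \<open>simp_all add: mild_sol_def c0_semigroup_zero[OF S]\<close>)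

section \<open>Taylor remainders and linear interpolation\<close>

lemma norm_diff_le_of_vector_derivative_bound:
  fixes f f' :: "real \<Rightarrow> 'a::real_normed_vector"
  assumes d: "\<And>x. x \<in> {p..q} \<Longrightarrow> (f has_vector_derivative f' x) (at x within {p..q})"
    and B: "\<And>x. x \<in> {p..q} \<Longrightarrow> norm (f' x) \<le> B"
    and x: "x \<in> {p..q}" and y: "y \<in> {p..q}"
  shows "norm (f x - f y) \<le> B * \<bar>x - y\<bar>"
proof -
  have "norm (f x - f y) \<le> B * norm (x - y)"
  proof (rule differentiable_bound[where f' = "\<lambda>x h. h *\<^sub>R f' x"])
    show "convex {p..q}" by simp
    fix z assume z: "z \<in> {p..q}"
    show "(f has_derivative (\<lambda>h. h *\<^sub>R f' z)) (at z within {p..q})"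
      using d[OF z] by (simp add: has_vector_derivative_def)
    have "onorm (\<lambda>h. h *\<^sub>R f' z) = onorm (\<lambda>h::real. h) * norm (f' z)"
      by (rule onorm_scaleR_left) (rule bounded_linear_ident)
    also have "\<dots> = norm (f' z)" by (simp add: onorm_id)
    finally show "onorm (\<lambda>h. h *\<^sub>R f' z) \<le> B" using B[OF z] by simp
  qed (use x y in auto)
  then show ?thesis by simp
qed

lemma taylor1_remainder_bound:
  fixes f f1 f2 :: "real \<Rightarrow> 'a::real_normed_vector"
  assumes d1: "\<And>x. x \<ge> 0 \<Longrightarrow> (f has_vector_derivative f1 x) (at x within {0..})"
    and d2: "\<And>x. x \<ge> 0 \<Longrightarrow> (f1 has_vector_derivative f2 x) (at x within {0..})"
    and K: "\<And>x. x \<ge> 0 \<Longrightarrow> norm (f2 x) \<le> K"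
    and p: "p \<ge> 0" and u: "u \<in> {p..p+\<Delta>}"
  shows "norm (f u - f p - (u - p) *\<^sub>R f1 p) \<le> K * \<Delta>^2"
proof -
  have D: "\<Delta> \<ge> 0" using u by simp
  have K0: "K \<ge> 0" using K[of 0] norm_ge_zero order_trans by blast
  have sub: "{p..p+\<Delta>} \<subseteq> {0..}" using p by auto
  have b1: "norm (f1 x - f1 p) \<le> K * \<Delta>" if x: "x \<in> {p..p+\<Delta>}" for x
  proof -
    have "norm (f1 x - f1 p) \<le> K * \<bar>x - p\<bar>"
      by (rule norm_diff_le_of_vector_derivative_bound[where f' = f2 and p = p and q = "p+\<Delta>"])
         (use x p in \<open>auto intro: has_vector_derivative_within_subset[OF d2 sub] K\<close>)
    also have "\<dots> \<le> K * \<Delta>" using x K0 by (intro mult_left_mono) auto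
    finally show ?thesis .
  qed
  define g where "g x = f x - f p - (x - p) *\<^sub>R f1 p" for x
  have "norm (g u - g p) \<le> (K * \<Delta>) * \<bar>u - p\<bar>"
  proof (rule norm_diff_le_of_vector_derivative_bound[where f' = "\<lambda>x. f1 x - f1 p" and p = p and q = "p+\<Delta>"])
    fix x assume x: "x \<in> {p..p+\<Delta>}"
    have "(f has_vector_derivative f1 x) (at x within {p..p+\<Delta>})"
      using has_vector_derivative_within_subset[OF d1 sub] x p by auto
    then show "(g has_vector_derivative f1 x - f1 p) (at x within {p..p+\<Delta>})"
      unfolding g_def by (auto intro!: derivative_eq_intros)
    show "norm (f1 x - f1 p) \<le> K * \<Delta>" by (rule b1[OF x])
  qed (use u in auto)
  also have "\<dots> \<le> (K * \<Delta>) * \<Delta>" using u K0 D by (intro mult_left_mono) auto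
  finally show ?thesis by (simp add: g_def power2_eq_square mult.assoc)
qed

lemma taylor2_remainder_bound:
  fixes f f1 f2 f3 :: "real \<Rightarrow> 'a::real_normed_vector"
  assumes d1: "\<And>x. x \<ge> 0 \<Longrightarrow> (f has_vector_derivative f1 x) (at x within {0..})"
    and d2: "\<And>x. x \<ge> 0 \<Longrightarrow> (f1 has_vector_derivative f2 x) (at x within {0..})"
    and d3: "\<And>x. x \<ge> 0 \<Longrightarrow> (f2 has_vector_derivative f3 x) (at x within {0..})"
    and K: "\<And>x. x \<ge> 0 \<Longrightarrow> norm (f3 x) \<le> K"
    and p: "p \<ge> 0" and u: "u \<in> {p..p+\<Delta>}"
  shows "norm (f u - f p - (u - p) *\<^sub>R f1 p - ((u - p)^2 / 2) *\<^sub>R f2 p) \<le> K * \<Delta>^3"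
proof -
  have D: "\<Delta> \<ge> 0" using u by simp
  have K0: "K \<ge> 0" using K[of 0] norm_ge_zero order_trans by blast
  have sub: "{p..p+\<Delta>} \<subseteq> {0..}" using p by auto
  define g where "g x = f x - f p - (x - p) *\<^sub>R f1 p - ((x - p)^2 / 2) *\<^sub>R f2 p" for x
  have "norm (g u - g p) \<le> (K * \<Delta>^2) * \<bar>u - p\<bar>"
  proof (rule norm_diff_le_of_vector_derivative_bound[where f' = "\<lambda>x. f1 x - f1 p - (x - p) *\<^sub>R f2 p" and p = p and q = "p+\<Delta>"])
    fix x assume x: "x \<in> {p..p+\<Delta>}"
    have "(f has_vector_derivative f1 x) (at x within {p..p+\<Delta>})"
      using has_vector_derivative_within_subset[OF d1 sub] x p by auto
    then show "(g has_vector_derivative f1 x - f1 p - (x - p) *\<^sub>R f2 p) (at x within {p..p+\<Delta>})"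
      unfolding g_def
      by (auto intro!: derivative_eq_intros simp: algebra_simps) (simp add: scaleR_add_left[symmetric] field_simps)
    show "norm (f1 x - f1 p - (x - p) *\<^sub>R f2 p) \<le> K * \<Delta>^2"
      by (rule taylor1_remainder_bound[OF d2 d3 K p x])
  qed (use u in auto)
  also have "\<dots> \<le> (K * \<Delta>^2) * \<Delta>" using u K0 D by (intro mult_left_mono) auto
  finally show ?thesis by (simp add: g_def power3_eq_cube power2_eq_square mult.assoc)
qed

lemma continuous_on_atLeast_of_has_vector_derivative:
  assumes "\<And>x. x \<ge> 0 \<Longrightarrow> (h has_vector_derivative h' x) (at x within {0..})"
  shows "continuous_on {0..} h"
  unfolding continuous_on_eq_continuous_within
  by (intro ballI has_vector_derivative_continuous[OF assms]) simp

definition interp_error :: "(real \<Rightarrow> 'a::real_normed_vector) \<Rightarrow> real \<Rightarrow> real \<Rightarrow> real \<Rightarrow> 'a" where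
  "interp_error g u1 u2 u = g u - g u1 - ((u - u1) / (u2 - u1)) *\<^sub>R (g u2 - g u1)"

lemma interp_residual_eq_interp_error:
  "interp_residual h r c1 c2 tau a s
   = interp_error h ((a + c1 * tau) powr r) ((a + c2 * tau) powr r) (s powr r)"
  unfolding interp_residual_def interp_error_def alpha0_def alpha1_def
  by (simp add: algebra_simps divide_inverse)

lemma interp_error_minus_quadratic:
  fixes h :: "real \<Rightarrow> 'a::real_normed_vector"
  assumes ne: "u1 \<noteq> u2"
  shows "interp_error h u1 u2 u = interp_error (\<lambda>x. h x - c0 - (x - p) *\<^sub>R v1 - ((x - p)^2 / 2) *\<^sub>R v2) u1 u2 u
            + ((u - u1) * (u - u2) / 2) *\<^sub>R v2"
proof -
  define \<alpha> where "\<alpha> = (u - u1) / (u2 - u1)"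
  have a: "\<alpha> * (u2 - u1) = u - u1" using ne by (simp add: \<alpha>_def)
  define Q where "Q x = c0 + (x - p) *\<^sub>R v1 + ((x - p)^2 / 2) *\<^sub>R v2" for x
  have q: "Q u - Q u1 - \<alpha> *\<^sub>R (Q u2 - Q u1)
      = (u - u1 - \<alpha> * (u2 - u1)) *\<^sub>R v1 + (((u - p)^2 - (u1 - p)^2 - \<alpha> * ((u2 - p)^2 - (u1 - p)^2)) / 2) *\<^sub>R v2"
    unfolding Q_def
    by (simp add: algebra_simps scaleR_diff_left scaleR_add_left diff_divide_distrib)
       (simp only: scaleR_add_left[symmetric] scaleR_cancel_right, simp add: field_simps)
  have c1: "u - u1 - \<alpha> * (u2 - u1) = 0" using a by simp
  have c2: "((u - p)^2 - (u1 - p)^2 - \<alpha> * ((u2 - p)^2 - (u1 - p)^2)) / 2 = (u - u1) * (u - u2) / 2"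
  proof -
    have uu: "u = u1 + \<alpha> * (u2 - u1)" using a by simp
    show ?thesis by (simp add: uu algebra_simps power2_eq_square)
  qed
  have "interp_error h u1 u2 u = interp_error (\<lambda>x. h x - Q x) u1 u2 u + (Q u - Q u1 - \<alpha> *\<^sub>R (Q u2 - Q u1))"
    unfolding interp_error_def \<alpha>_def by (simp add: algebra_simps)
  also have "\<dots> = interp_error (\<lambda>x. h x - Q x) u1 u2 u + ((u - u1) * (u - u2) / 2) *\<^sub>R v2"
    unfolding q c1 c2 by simp
  finally show ?thesis by (simp add: Q_def algebra_simps)
qed

lemma norm_interp_error_le:
  fixes g :: "real \<Rightarrow> 'a::real_normed_vector"
  assumes ne: "u1 \<noteq> u2" and B: "norm (g u) \<le> B" "norm (g u1) \<le> B" "norm (g u2) \<le> B"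
    and rho: "\<bar>u - u1\<bar> \<le> \<rho> * \<bar>u2 - u1\<bar>"
  shows "norm (interp_error g u1 u2 u) \<le> (2 + 2 * \<rho>) * B"
proof -
  have r0: "\<bar>u - u1\<bar> / \<bar>u2 - u1\<bar> \<le> \<rho>" using rho ne by (simp add: divide_le_eq)
  have B0: "B \<ge> 0" using B(1) norm_ge_zero order_trans by blast
  have "norm (interp_error g u1 u2 u) \<le> norm (g u) + norm (g u1) + norm (((u - u1) / (u2 - u1)) *\<^sub>R (g u2 - g u1))"
    unfolding interp_error_def
    using norm_triangle_ineq4[of "g u - g u1" "((u - u1) / (u2 - u1)) *\<^sub>R (g u2 - g u1)"]
      norm_triangle_ineq4[of "g u" "g u1"] by linarith
  also have "norm (((u - u1) / (u2 - u1)) *\<^sub>R (g u2 - g u1)) \<le> \<rho> * (2 * B)"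
  proof -
    have "norm (((u - u1) / (u2 - u1)) *\<^sub>R (g u2 - g u1)) = (\<bar>u - u1\<bar> / \<bar>u2 - u1\<bar>) * norm (g u2 - g u1)"
      by (simp add: abs_divide)
    also have "\<dots> \<le> \<rho> * (2 * B)"
    proof (rule mult_mono)
      show "norm (g u2 - g u1) \<le> 2 * B" using B norm_triangle_ineq4[of "g u2" "g u1"] by linarith
      show "0 \<le> \<rho>" using r0 by (meson abs_ge_zero divide_nonneg_nonneg order_trans)
    qed (use r0 in auto)
    finally show ?thesis .
  qed
  finally show ?thesis using B by (simp add: algebra_simps)
qed

section \<open>Estimates for the power function\<close>

lemma powr_mean_value:
  fixes x y p :: real
  assumes "0 < x" "x \<le> y"
  shows "\<exists>\<xi>. x \<le> \<xi> \<and> \<xi> \<le> y \<and> y powr p - x powr p = p * \<xi> powr (p - 1) * (y - x)"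
proof (cases "x = y")
  case True then show ?thesis by (intro exI[of _ x]) auto
next
  case False
  then have xy: "x < y" using assms by simp
  have "\<exists>z. x < z \<and> z < y \<and> y powr p - x powr p = (y - x) * (p * z powr (p - 1))"
    by (rule MVT2[OF xy]) (use assms in \<open>auto intro: has_real_derivative_powr\<close>)
  then obtain z where z: "x < z" "z < y" "y powr p - x powr p = (y - x) * (p * z powr (p - 1))" by blast
  show ?thesis by (rule exI[of _ z]) (use z in \<open>auto simp: algebra_simps\<close>)
qed

lemma powr_diff_le:
  fixes x y r :: real
  assumes "0 < x" "x \<le> y" "0 < r" "r \<le> 1"
  shows "y powr r - x powr r \<le> r * x powr (r - 1) * (y - x)"
proof -
  obtain \<xi> where \<xi>: "x \<le> \<xi>" "\<xi> \<le> y" "y powr r - x powr r = r * \<xi> powr (r - 1) * (y - x)"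
    using powr_mean_value[OF assms(1,2)] by blast
  have "\<xi> powr (r - 1) \<le> x powr (r - 1)" using powr_mono2'[of "r - 1" x \<xi>] assms \<xi> by simp
  then show ?thesis unfolding \<xi>(3) using assms by (intro mult_right_mono mult_left_mono) auto
qed

lemma powr_diff_ge:
  fixes x y r :: real
  assumes "0 < x" "x \<le> y" "0 < r" "r \<le> 1"
  shows "r * y powr (r - 1) * (y - x) \<le> y powr r - x powr r"
proof -
  obtain \<xi> where \<xi>: "x \<le> \<xi>" "\<xi> \<le> y" "y powr r - x powr r = r * \<xi> powr (r - 1) * (y - x)"
    using powr_mean_value[OF assms(1,2)] by blast
  have "y powr (r - 1) \<le> \<xi> powr (r - 1)" using powr_mono2'[of "r - 1" \<xi> y] assms \<xi> by simp
  then show ?thesis unfolding \<xi>(3) using assms by (intro mult_right_mono mult_left_mono) auto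
qed

lemma powr_diff_pred_le:
  fixes x y r :: real
  assumes "0 < x" "x \<le> y" "0 < r" "r \<le> 1"
  shows "x powr (r - 1) - y powr (r - 1) \<le> (1 - r) * x powr (r - 2) * (y - x)"
proof -
  obtain \<xi> where \<xi>: "x \<le> \<xi>" "\<xi> \<le> y" "y powr (r - 1) - x powr (r - 1) = (r - 1) * \<xi> powr (r - 1 - 1) * (y - x)"
    using powr_mean_value[OF assms(1,2)] by blast
  have "\<xi> powr (r - 2) \<le> x powr (r - 2)" using powr_mono2'[of "r - 2" x \<xi>] assms \<xi> by simp
  then have "(1 - r) * \<xi> powr (r - 2) * (y - x) \<le> (1 - r) * x powr (r - 2) * (y - x)"
    using assms by (intro mult_right_mono mult_left_mono) auto
  moreover have "x powr (r - 1) - y powr (r - 1) = (1 - r) * \<xi> powr (r - 2) * (y - x)"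
    using \<xi>(3) by (simp add: algebra_simps)
  ultimately show ?thesis by simp
qed

lemma powr_linearization_error:
  fixes a s r tau :: real
  assumes a: "0 < a" and s: "a \<le> s" "s \<le> a + tau" and r: "0 < r" "r < 1"
  shows "\<bar>s powr r - a powr r - r * a powr (r - 1) * (s - a)\<bar> \<le> a powr (r - 2) * tau^2"
proof -
  have "s powr r - a powr r - r * a powr (r - 1) * (s - a) \<le> 0"
    using powr_diff_le[of a s r] a s r by simp
  moreover have "- (r * (1 - r) * (a powr (r - 2) * (s - a)^2)) \<le> s powr r - a powr r - r * a powr (r - 1) * (s - a)"
  proof -
    have "r * (s - a) * (a powr (r - 1) - s powr (r - 1)) \<le> r * (s - a) * ((1 - r) * a powr (r - 2) * (s - a))"
      using powr_diff_pred_le[of a s r] a s r by (intro mult_left_mono) auto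
    then show ?thesis using powr_diff_ge[of a s r] a s r by (simp add: power2_eq_square algebra_simps)
  qed
  moreover have "r * (1 - r) * (a powr (r - 2) * (s - a)^2) \<le> 1 * (a powr (r - 2) * tau^2)"
    using r s by (intro mult_mono mult_left_mono mult_le_one power_mono) auto
  ultimately show ?thesis by linarith
qed

lemma powr_local_defect_exponents:
  fixes a r :: real
  assumes a: "a > 0"
  shows "a powr (r - 1) * a powr (r - 2) = a powr (2 * r - 3)"
    and "(a powr (r - 1))^2 = a powr (2 * r - 3) * a"
    and "(a powr (r - 1))^3 = a powr (2 * r - 3) * a powr r"
proof -
  have p: "a powr x * a powr y = a powr z" if "x + y = z" for x y z
    using that by (simp add: powr_add[symmetric])
  show "a powr (r - 1) * a powr (r - 2) = a powr (2 * r - 3)" by (rule p) simp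
  show "(a powr (r - 1))^2 = a powr (2 * r - 3) * a"
    using p[of "r - 1" "r - 1"] p[of "2 * r - 3" 1] a by (simp add: power2_eq_square)
  show "(a powr (r - 1))^3 = a powr (2 * r - 3) * a powr r"
    using p[of "r - 1" "r - 1"] p[of "2 * r - 2" "r - 1"] p[of "2 * r - 3" r]
    by (simp add: power3_eq_cube)
qed

lemma product_perturbation_bound:
  fixes D e1 e2 \<epsilon> th c1 c2 :: real
  assumes "\<bar>th - c1\<bar> \<le> 1" "\<bar>th - c2\<bar> \<le> 1" "\<bar>e1\<bar> \<le> 2 * \<epsilon>" "\<bar>e2\<bar> \<le> 2 * \<epsilon>" "D \<ge> 0"
  shows "\<bar>(D * (th - c1) + e1) * (D * (th - c2) + e2) - D^2 * ((th - c1) * (th - c2))\<bar> \<le> 4 * D * \<epsilon> + 4 * \<epsilon>^2"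
proof -
  have eq: "(D * (th - c1) + e1) * (D * (th - c2) + e2) - D^2 * ((th - c1) * (th - c2))
      = D * (th - c1) * e2 + D * (th - c2) * e1 + e1 * e2"
    by (simp add: algebra_simps power2_eq_square)
  have b1: "\<bar>D * (th - c1) * e2\<bar> \<le> D * 1 * (2 * \<epsilon>)"
    unfolding abs_mult using assms by (intro mult_mono) auto
  have b2: "\<bar>D * (th - c2) * e1\<bar> \<le> D * 1 * (2 * \<epsilon>)"
    unfolding abs_mult using assms by (intro mult_mono) auto
  have b3: "\<bar>e1 * e2\<bar> \<le> (2 * \<epsilon>) * (2 * \<epsilon>)"
    unfolding abs_mult using assms by (intro mult_mono) auto
  show ?thesis unfolding eq using b1 b2 b3 abs_triangle_ineq[of "D * (th - c1) * e2 + D * (th - c2) * e1" "e1 * e2"]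
    abs_triangle_ineq[of "D * (th - c1) * e2" "D * (th - c2) * e1"]
    by (simp add: power2_eq_square)
qed

lemma powr_remainder_products_le:
  fixes a tau r :: real
  assumes tau: "0 < tau" "tau \<le> a" and r: "0 < r" "r < 1"
  shows "r * a powr (r - 1) * tau * (a powr (r - 2) * tau^2) \<le> a powr (2 * r - 3) * tau^3"
    and "(a powr (r - 2) * tau^2)^2 \<le> a powr (2 * r - 3) * tau^3"
proof -
  have a: "a > 0" using tau by simp
  have "r * a powr (r - 1) * tau * (a powr (r - 2) * tau^2) = r * (a powr (2 * r - 3) * tau^3)"
    using powr_local_defect_exponents(1)[OF a] by (simp add: power2_eq_square power3_eq_cube mult_ac)
  also have "\<dots> \<le> a powr (2 * r - 3) * tau^3" using r tau by (simp add: mult_left_le_one_le)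
  finally show "r * a powr (r - 1) * tau * (a powr (r - 2) * tau^2) \<le> a powr (2 * r - 3) * tau^3" .
  have "a powr (r - 2) * a = a powr (r - 1)"
    using a powr_add[of a "r - 2" 1] by simp
  then have p: "a powr (r - 2) * a powr (r - 2) * a = a powr (2 * r - 3)"
    using powr_local_defect_exponents(1)[OF a] by (metis mult.commute mult.left_commute)
  have "(a powr (r - 2) * tau^2)^2 = (a powr (r - 2) * a powr (r - 2) * a) * tau^3 * (tau / a)"
    using a by (simp add: power2_eq_square power3_eq_cube field_simps)
  also have "\<dots> \<le> a powr (2 * r - 3) * tau^3 * 1"
    unfolding p using tau by (intro mult_left_mono) auto
  finally show "(a powr (r - 2) * tau^2)^2 \<le> a powr (2 * r - 3) * tau^3" by simp
qed

lemma node_product_approx: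
  fixes a tau r c1 c2 s :: real
  assumes tau: "0 < tau" "tau \<le> a" and r: "0 < r" "r < 1"
    and c: "c1 \<in> {0..1}" "c2 \<in> {0..1}" and s: "a \<le> s" "s \<le> a + tau"
  shows "\<bar>(s powr r - (a + c1 * tau) powr r) * (s powr r - (a + c2 * tau) powr r)
          - (r * a powr (r - 1) * tau)^2 * (((s - a) / tau - c1) * ((s - a) / tau - c2))\<bar>
         \<le> 8 * (a powr (2 * r - 3) * tau^3)"
proof -
  define D where "D = r * a powr (r - 1) * tau"
  define \<epsilon> where "\<epsilon> = a powr (r - 2) * tau^2"
  define R where "R x = x powr r - a powr r - r * a powr (r - 1) * (x - a)" for x
  have Rb: "\<bar>R x\<bar> \<le> \<epsilon>" if "a \<le> x" "x \<le> a + tau" for x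
    unfolding R_def \<epsilon>_def by (rule powr_linearization_error) (use that tau r in auto)
  define th where "th = (s - a) / tau"
  have th: "0 \<le> th" "th \<le> 1" using s tau by (auto simp: th_def)
  have sth: "s - a = tau * th" using tau by (simp add: th_def)
  have dec: "s powr r - (a + ci * tau) powr r = D * (th - ci) + (R s - R (a + ci * tau))" for ci
    unfolding R_def D_def using sth by (simp add: algebra_simps)
  have ei: "\<bar>R s - R (a + ci * tau)\<bar> \<le> 2 * \<epsilon>" if "ci \<in> {0..1}" for ci
  proof -
    have "a + ci * tau \<le> a + tau" using that tau by (simp add: mult_left_le_one_le)
    then have "\<bar>R (a + ci * tau)\<bar> \<le> \<epsilon>" using that tau by (intro Rb) auto
    moreover have "\<bar>R s\<bar> \<le> \<epsilon>" using s by (intro Rb) auto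
    ultimately show ?thesis by linarith
  qed
  have D0: "D \<ge> 0" using r tau by (simp add: D_def)
  have main: "\<bar>(D * (th - c1) + (R s - R (a + c1 * tau))) * (D * (th - c2) + (R s - R (a + c2 * tau))) - D^2 * ((th - c1) * (th - c2))\<bar>
      \<le> 4 * D * \<epsilon> + 4 * \<epsilon>^2"
    by (rule product_perturbation_bound) (use th c ei D0 in auto)
  have t: "D * \<epsilon> \<le> a powr (2 * r - 3) * tau^3" "\<epsilon>^2 \<le> a powr (2 * r - 3) * tau^3"
    unfolding D_def \<epsilon>_def using powr_remainder_products_le[OF tau r] by auto
  have "(s powr r - (a + c1 * tau) powr r) * (s powr r - (a + c2 * tau) powr r)
          - (r * a powr (r - 1) * tau)^2 * (((s - a) / tau - c1) * ((s - a) / tau - c2))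
        = (D * (th - c1) + (R s - R (a + c1 * tau))) * (D * (th - c2) + (R s - R (a + c2 * tau))) - D^2 * ((th - c1) * (th - c2))"
    unfolding dec by (simp add: D_def th_def)
  then show ?thesis using main t by linarith
qed

lemma node_polynomial_has_integral_0:
  fixes a tau c1 c2 :: real
  assumes tau: "0 < tau" and c: "1/3 - (c1 + c2) / 2 + c1 * c2 = 0"
  shows "((\<lambda>s. ((s - a) / tau - c1) * ((s - a) / tau - c2)) has_integral 0) {a..a+tau}"
proof -
  define A3 where "A3 = 1 / (3 * tau^2)"
  define B2 where "B2 = (c1 + c2) / (2 * tau)"
  define C where "C = c1 * c2"
  define F where "F s = A3 * (s - a)^3 - B2 * (s - a)^2 + C * (s - a)" for s
  have "((\<lambda>s. ((s - a) / tau - c1) * ((s - a) / tau - c2)) has_integral (F (a + tau) - F a)) {a..a+tau}"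
  proof (rule fundamental_theorem_of_calculus)
    show "a \<le> a + tau" using tau by simp
    fix x assume "x \<in> {a..a+tau}"
    have d: "(F has_real_derivative (A3 * (3 * (x - a)^2) - B2 * (2 * (x - a)) + C)) (at x within {a..a + tau})"
      unfolding F_def by (auto intro!: derivative_eq_intros)
    have e: "A3 * (3 * (x - a)^2) - B2 * (2 * (x - a)) + C
        = ((x - a) / tau - c1) * ((x - a) / tau - c2)"
      using tau by (simp add: A3_def B2_def C_def field_simps power2_eq_square)
    show "(F has_vector_derivative ((x - a) / tau - c1) * ((x - a) / tau - c2)) (at x within {a..a + tau})"
      using d unfolding e has_real_derivative_iff_has_vector_derivative .
  qed
  moreover have "F (a + tau) - F a = tau * (1/3 - (c1 + c2) / 2 + c1 * c2)"
    using tau by (simp add: F_def A3_def B2_def C_def field_simps power2_eq_square power3_eq_cube)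
  moreover have "\<dots> = 0" using c by simp
  ultimately show ?thesis by simp
qed

lemma powr_diff_abs_le_on_step:
  fixes a tau r s s' :: real
  assumes a: "0 < a" and tau: "0 < tau" and r: "0 < r" "r < 1"
    and s: "a \<le> s" "s \<le> a + tau" and s': "a \<le> s'" "s' \<le> a + tau"
  shows "\<bar>s powr r - s' powr r\<bar> \<le> r * a powr (r - 1) * tau"
proof -
  have m: "a powr r \<le> x powr r" "x powr r \<le> (a + tau) powr r" if "a \<le> x" "x \<le> a + tau" for x
    using that a r by (auto intro: powr_mono2)
  have "(a + tau) powr r - a powr r \<le> r * a powr (r - 1) * (a + tau - a)"
    by (rule powr_diff_le) (use a tau r in auto)
  then have "(a + tau) powr r - a powr r \<le> r * a powr (r - 1) * tau" by simp
  then show ?thesis unfolding abs_le_iff using m[OF s] m[OF s'] by linarith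
qed

lemma powr_diff_ge_on_step:
  fixes a tau r d1 d2 :: real
  assumes tau: "0 < tau" "tau \<le> a" and r: "0 < r" "r < 1" and d: "0 \<le> d1" "d1 \<le> d2" "d2 \<le> 1"
  shows "r * a powr (r - 1) * (d2 - d1) * tau / 2 \<le> (a + d2 * tau) powr r - (a + d1 * tau) powr r"
proof -
  have a: "0 < a" using tau by simp
  have x0: "0 < a + d1 * tau" using a tau d by (simp add: add_pos_nonneg)
  have xy: "a + d1 * tau \<le> a + d2 * tau" using d tau by (simp add: mult_right_mono)
  have "a powr (r - 1) / 2 \<le> (a + d2 * tau) powr (r - 1)"
  proof -
    have "a + d2 * tau \<le> 2 * a" using d tau by (smt (verit) mult_left_le_one_le)
    with x0 xy r have "(2 * a) powr (r - 1) \<le> (a + d2 * tau) powr (r - 1)"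
      by (intro powr_mono2') auto
    moreover have "1 / 2 \<le> 2 powr (r - 1)"
      using powr_mono[of "-1" "r - 1" 2] r by (simp add: powr_minus_divide)
    then have "a powr (r - 1) / 2 \<le> (2 * a) powr (r - 1)"
      using a mult_right_mono[of "1 / 2" "2 powr (r - 1)" "a powr (r - 1)"] by (simp add: powr_mult)
    ultimately show ?thesis by linarith
  qed
  then have "r * (a powr (r - 1) / 2) * ((d2 - d1) * tau) \<le> r * (a + d2 * tau) powr (r - 1) * ((d2 - d1) * tau)"
    using r d tau by (intro mult_right_mono mult_left_mono) auto
  also have "\<dots> \<le> (a + d2 * tau) powr r - (a + d1 * tau) powr r"
    using powr_diff_ge[OF x0 xy r(1) less_imp_le[OF r(2)]] by (simp add: algebra_simps)
  finally show ?thesis by (simp add: algebra_simps)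
qed

lemma powr_node_gap_ge:
  fixes a tau r c1 c2 :: real
  assumes tau: "0 < tau" "tau \<le> a" and r: "0 < r" "r < 1" and c: "c1 \<in> {0..1}" "c2 \<in> {0..1}"
  shows "r * a powr (r - 1) * \<bar>c2 - c1\<bar> * tau / 2 \<le> \<bar>(a + c2 * tau) powr r - (a + c1 * tau) powr r\<bar>"
proof (cases "c1 \<le> c2")
  case True
  then have "r * a powr (r - 1) * (c2 - c1) * tau / 2 \<le> (a + c2 * tau) powr r - (a + c1 * tau) powr r"
    using powr_diff_ge_on_step[OF tau r, of c1 c2] c by auto
  from order_trans[OF this abs_ge_self] show ?thesis using True by simp
next
  case False
  then have "r * a powr (r - 1) * (c1 - c2) * tau / 2 \<le> (a + c1 * tau) powr r - (a + c2 * tau) powr r"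
    using powr_diff_ge_on_step[OF tau r, of c2 c1] c by auto
  from order_trans[OF this abs_ge_self] show ?thesis using False by (simp add: abs_minus_commute)
qed

lemma powr_node_ratio_bound:
  fixes a tau r c1 c2 s :: real
  assumes tau: "0 < tau" "tau \<le> a" and r: "0 < r" "r < 1"
    and c: "c1 \<in> {0..1}" "c2 \<in> {0..1}" "c1 \<noteq> c2" and s: "a \<le> s" "s \<le> a + tau"
  shows "\<bar>s powr r - (a + c1 * tau) powr r\<bar> \<le> (2 / \<bar>c2 - c1\<bar>) * \<bar>(a + c2 * tau) powr r - (a + c1 * tau) powr r\<bar>"
proof -
  have c1i: "a \<le> a + c1 * tau" "a + c1 * tau \<le> a + tau" using c tau by (auto simp: mult_left_le_one_le)
  have "\<bar>s powr r - (a + c1 * tau) powr r\<bar> \<le> r * a powr (r - 1) * tau"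
    by (rule powr_diff_abs_le_on_step) (use tau r s c1i in auto)
  also have "\<dots> = (2 / \<bar>c2 - c1\<bar>) * (r * a powr (r - 1) * \<bar>c2 - c1\<bar> * tau / 2)"
    using c by (simp add: field_simps)
  also have "\<dots> \<le> (2 / \<bar>c2 - c1\<bar>) * \<bar>(a + c2 * tau) powr r - (a + c1 * tau) powr r\<bar>"
    by (intro mult_left_mono powr_node_gap_ge) (use tau r c in auto)
  finally show ?thesis .
qed

lemma powr_neq_powr:
  fixes x y r :: real
  assumes "0 \<le> x" "0 \<le> y" "x \<noteq> y" "0 < r"
  shows "x powr r \<noteq> y powr r"
  using assms powr_less_mono2[of r x y] powr_less_mono2[of r y x] by (cases "x < y") auto

lemma powr_node_ratio_bound_first_step:
  fixes tau r c1 c2 s :: real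
  assumes tau: "0 < tau" and r: "0 < r" and c: "c1 \<in> {0..1}" "c2 \<in> {0..1}" "c1 \<noteq> c2"
    and s: "0 \<le> s" "s \<le> tau"
  shows "\<bar>s powr r - (c1 * tau) powr r\<bar> \<le> (1 / \<bar>c2 powr r - c1 powr r\<bar>) * \<bar>(c2 * tau) powr r - (c1 * tau) powr r\<bar>"
proof -
  have "x powr r \<in> {0..tau powr r}" if "0 \<le> x" "x \<le> tau" for x
    using that r by (auto intro: powr_mono2)
  moreover have "c1 * tau \<le> tau" using c tau by (simp add: mult_left_le_one_le)
  ultimately have "\<bar>s powr r - (c1 * tau) powr r\<bar> \<le> tau powr r"
    using s c tau unfolding abs_le_iff by (smt (verit) atLeastAtMost_iff mult_nonneg_nonneg)
  also have "\<dots> = (1 / \<bar>c2 powr r - c1 powr r\<bar>) * \<bar>(c2 * tau) powr r - (c1 * tau) powr r\<bar>"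
  proof -
    have "(c2 * tau) powr r - (c1 * tau) powr r = tau powr r * (c2 powr r - c1 powr r)"
      using c tau by (simp add: powr_mult algebra_simps)
    moreover have "c2 powr r \<noteq> c1 powr r" using powr_neq_powr[of c2 c1 r] c r by auto
    ultimately show ?thesis using tau by (simp add: abs_mult)
  qed
  finally show ?thesis .
qed

lemma node_product_abs_le:
  fixes a tau r c1 c2 s :: real
  assumes tau: "0 < tau" "tau \<le> a" and r: "0 < r" "r < 1"
    and c: "c1 \<in> {0..1}" "c2 \<in> {0..1}" and s: "a \<le> s" "s \<le> a + tau"
  shows "\<bar>(s powr r - (a + c1 * tau) powr r) * (s powr r - (a + c2 * tau) powr r)\<bar>
         \<le> (r * a powr (r - 1) * tau)^2"
proof -
  have "\<bar>s powr r - (a + ci * tau) powr r\<bar> \<le> r * a powr (r - 1) * tau" if "ci \<in> {0..1}" for ci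
    using that tau by (intro powr_diff_abs_le_on_step) (auto simp: r s mult_left_le_one_le)
  then show ?thesis
    unfolding abs_mult power2_eq_square using c r tau by (intro mult_mono) auto
qed

section \<open>Local and global error\<close>

lemma interp_residual_first_step_bound:
  fixes h h1 h2 :: "real \<Rightarrow> 'a::banach"
  assumes tau: "0 < tau" and r: "0 < r" and c: "c1 \<in> {0..1}" "c2 \<in> {0..1}" "c1 \<noteq> c2"
    and d1: "\<And>x. x \<ge> 0 \<Longrightarrow> (h has_vector_derivative h1 x) (at x within {0..})"
    and d2: "\<And>x. x \<ge> 0 \<Longrightarrow> (h1 has_vector_derivative h2 x) (at x within {0..})"
    and K2: "\<And>x. x \<ge> 0 \<Longrightarrow> norm (h2 x) \<le> K2"
    and s: "s \<in> {0..tau}"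
  shows "norm (interp_residual h r c1 c2 tau 0 s)
         \<le> (2 + 2 * (1 / \<bar>c2 powr r - c1 powr r\<bar>)) * (K2 * (tau powr r)^2)"
proof -
  define u1 where "u1 = (c1 * tau) powr r"
  define u2 where "u2 = (c2 * tau) powr r"
  have "u2 - u1 = tau powr r * (c2 powr r - c1 powr r)"
    using c tau by (simp add: u1_def u2_def powr_mult algebra_simps)
  then have une: "u1 \<noteq> u2" using powr_neq_powr[of c2 c1 r] c r tau by auto
  define g where "g x = h x - h 0 - x *\<^sub>R h1 0" for x
  have g: "norm (g (x powr r)) \<le> K2 * (tau powr r)^2" if "0 \<le> x" "x \<le> tau" for x
  proof -
    have "x powr r \<le> tau powr r" using that r by (intro powr_mono2) auto
    then show ?thesis
      unfolding g_def using taylor1_remainder_bound[OF d1 d2 K2, of 0 "x powr r" "tau powr r"] by simp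
  qed
  have "interp_residual h r c1 c2 tau 0 s = interp_error h u1 u2 (s powr r)"
    unfolding interp_residual_eq_interp_error u1_def u2_def by simp
  also have "\<dots> = interp_error g u1 u2 (s powr r)"
    using interp_error_minus_quadratic[OF une, of h "s powr r" "h 0" 0 "h1 0" 0] by (simp add: g_def[abs_def])
  also have "norm \<dots> \<le> (2 + 2 * (1 / \<bar>c2 powr r - c1 powr r\<bar>)) * (K2 * (tau powr r)^2)"
  proof (rule norm_interp_error_le[OF une])
    have "c1 * tau \<in> {0..tau}" "c2 * tau \<in> {0..tau}" using c tau by (auto simp: mult_left_le_one_le)
    then show "norm (g (s powr r)) \<le> K2 * (tau powr r)^2" "norm (g u1) \<le> K2 * (tau powr r)^2"
      "norm (g u2) \<le> K2 * (tau powr r)^2"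
      using s unfolding u1_def u2_def by (intro g; simp)+
    show "\<bar>s powr r - u1\<bar> \<le> (1 / \<bar>c2 powr r - c1 powr r\<bar>) * \<bar>u2 - u1\<bar>"
      unfolding u1_def u2_def using s by (intro powr_node_ratio_bound_first_step[OF tau r c]) auto
  qed
  finally show ?thesis .
qed

lemma local_defect_first_step_bound:
  fixes S :: "real \<Rightarrow> 'a::banach \<Rightarrow> 'a" and h h1 h2 :: "real \<Rightarrow> 'a"
  assumes S: "c0_semigroup S" and M: "\<forall>t\<in>{0..L}. \<forall>x. norm (S t x) \<le> M * norm x" "M \<ge> 0"
    and tau: "0 < tau" "tau \<le> L" and r: "0 < r"
    and c: "c1 \<in> {0..1}" "c2 \<in> {0..1}" "c1 \<noteq> c2"
    and d1: "\<And>x. x \<ge> 0 \<Longrightarrow> (h has_vector_derivative h1 x) (at x within {0..})"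
    and d2: "\<And>x. x \<ge> 0 \<Longrightarrow> (h1 has_vector_derivative h2 x) (at x within {0..})"
    and K2: "\<And>x. x \<ge> 0 \<Longrightarrow> norm (h2 x) \<le> K2"
  shows "norm (local_defect S h r c1 c2 tau 0)
         \<le> tau * (M * ((2 + 2 * (1 / \<bar>c2 powr r - c1 powr r\<bar>)) * (K2 * (tau powr r)^2)))"
  unfolding local_defect_def
proof (rule norm_integral_c0_semigroup_le[OF S M _ tau(2)])
  show "continuous_on {0..0 + tau} (interp_residual h r c1 c2 tau 0)"
    by (rule continuous_on_interp_residual[OF continuous_on_atLeast_of_has_vector_derivative[OF d1] r]) auto
qed (use tau interp_residual_first_step_bound[OF tau(1) r c d1 d2 K2] in auto)

lemma interp_residual_quadratic_approx:
  fixes h h1 h2 h3 :: "real \<Rightarrow> 'a::banach"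
  assumes tau: "0 < tau" "tau \<le> a" and r: "0 < r" "r < 1"
    and c: "c1 \<in> {0..1}" "c2 \<in> {0..1}" "c1 \<noteq> c2"
    and d1: "\<And>x. x \<ge> 0 \<Longrightarrow> (h has_vector_derivative h1 x) (at x within {0..})"
    and d2: "\<And>x. x \<ge> 0 \<Longrightarrow> (h1 has_vector_derivative h2 x) (at x within {0..})"
    and d3: "\<And>x. x \<ge> 0 \<Longrightarrow> (h2 has_vector_derivative h3 x) (at x within {0..})"
    and K3: "\<And>x. x \<ge> 0 \<Longrightarrow> norm (h3 x) \<le> K3"
    and s: "a \<le> s" "s \<le> a + tau"
  shows "norm (interp_residual h r c1 c2 tau a s
           - ((s powr r - (a + c1 * tau) powr r) * (s powr r - (a + c2 * tau) powr r) / 2) *\<^sub>R h2 (a powr r))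
         \<le> (2 + 2 * (2 / \<bar>c2 - c1\<bar>)) * (K3 * (r * a powr (r - 1) * tau)^3)"
proof -
  have a0: "0 < a" using tau by simp
  define ua where "ua = a powr r"
  define u1 where "u1 = (a + c1 * tau) powr r"
  define u2 where "u2 = (a + c2 * tau) powr r"
  define \<Delta> where "\<Delta> = r * a powr (r - 1) * tau"
  have une: "u1 \<noteq> u2"
  proof -
    have "0 < r * a powr (r - 1) * \<bar>c2 - c1\<bar> * tau / 2" using r a0 tau c by simp
    also have "\<dots> \<le> \<bar>u2 - u1\<bar>"
      unfolding u1_def u2_def by (rule powr_node_gap_ge) (use tau r c in auto)
    finally show ?thesis by auto
  qed
  have ci: "a \<le> a + ci * tau" "a + ci * tau \<le> a + tau" if "ci \<in> {0..1}" for ci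
    using that tau by (auto simp: mult_left_le_one_le)
  define g where "g x = h x - h ua - (x - ua) *\<^sub>R h1 ua - ((x - ua)^2 / 2) *\<^sub>R h2 ua" for x
  have g: "norm (g (x powr r)) \<le> K3 * \<Delta>^3" if "a \<le> x" "x \<le> a + tau" for x
  proof -
    have "ua \<le> x powr r" "x powr r \<le> (a + tau) powr r"
      unfolding ua_def using that a0 r by (auto intro: powr_mono2)
    moreover have "(a + tau) powr r - a powr r \<le> r * a powr (r - 1) * (a + tau - a)"
      by (rule powr_diff_le) (use a0 tau r in auto)
    ultimately have "x powr r \<in> {ua..ua + \<Delta>}" by (simp add: ua_def \<Delta>_def)
    from taylor2_remainder_bound[OF d1 d2 d3 K3 _ this] show ?thesis
      unfolding g_def by (simp add: ua_def)
  qed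
  have "interp_residual h r c1 c2 tau a s = interp_error h u1 u2 (s powr r)"
    unfolding interp_residual_eq_interp_error u1_def u2_def ..
  also have "\<dots> = interp_error g u1 u2 (s powr r) + ((s powr r - u1) * (s powr r - u2) / 2) *\<^sub>R h2 ua"
    using interp_error_minus_quadratic[OF une, of h "s powr r" "h ua" ua "h1 ua" "h2 ua"]
    by (simp add: g_def[abs_def])
  finally have "interp_residual h r c1 c2 tau a s - ((s powr r - u1) * (s powr r - u2) / 2) *\<^sub>R h2 ua
      = interp_error g u1 u2 (s powr r)" by simp
  also have "norm \<dots> \<le> (2 + 2 * (2 / \<bar>c2 - c1\<bar>)) * (K3 * \<Delta>^3)"
  proof (rule norm_interp_error_le[OF une])
    show "norm (g (s powr r)) \<le> K3 * \<Delta>^3" "norm (g u1) \<le> K3 * \<Delta>^3" "norm (g u2) \<le> K3 * \<Delta>^3"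
      unfolding u1_def u2_def using s ci[OF c(1)] ci[OF c(2)] by (intro g; simp)+
    show "\<bar>s powr r - u1\<bar> \<le> 2 / \<bar>c2 - c1\<bar> * \<bar>u2 - u1\<bar>"
      unfolding u1_def u2_def by (rule powr_node_ratio_bound) (use tau r c s in auto)
  qed
  finally show ?thesis by (simp add: ua_def u1_def u2_def \<Delta>_def)
qed

lemma propagated_interp_residual_approx:
  fixes S :: "real \<Rightarrow> 'a::banach \<Rightarrow> 'a" and h h1 h2 h3 :: "real \<Rightarrow> 'a"
  assumes gen: "generates A D S" and M: "\<forall>t\<in>{0..L}. \<forall>x. norm (S t x) \<le> M * norm x" "M \<ge> 0"
    and tau: "0 < tau" "tau < L" "tau \<le> a" and r: "0 < r" "r < 1"
    and c: "c1 \<in> {0..1}" "c2 \<in> {0..1}" "c1 \<noteq> c2"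
    and d1: "\<And>x. x \<ge> 0 \<Longrightarrow> (h has_vector_derivative h1 x) (at x within {0..})"
    and d2: "\<And>x. x \<ge> 0 \<Longrightarrow> (h1 has_vector_derivative h2 x) (at x within {0..})"
    and d3: "\<And>x. x \<ge> 0 \<Longrightarrow> (h2 has_vector_derivative h3 x) (at x within {0..})"
    and K2: "\<And>x. x \<ge> 0 \<Longrightarrow> norm (h2 x) \<le> K2"
    and K3: "\<And>x. x \<ge> 0 \<Longrightarrow> norm (h3 x) \<le> K3"
    and KA: "\<And>x. x \<ge> 0 \<Longrightarrow> norm (A (h2 x)) \<le> KA"
    and dom: "\<And>x. x \<ge> 0 \<Longrightarrow> h2 x \<in> D"
    and s: "a \<le> s" "s \<le> a + tau"
  defines "\<Delta> \<equiv> r * a powr (r - 1) * tau"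
  shows "norm (S (a + tau - s) (interp_residual h r c1 c2 tau a s)
           - (\<Delta>^2 * (((s - a) / tau - c1) * ((s - a) / tau - c2)) / 2) *\<^sub>R h2 (a powr r))
         \<le> M * ((2 + 2 * (2 / \<bar>c2 - c1\<bar>)) * (K3 * \<Delta>^3)) + \<Delta>^2 / 2 * (M * KA * tau)
            + K2 / 2 * (8 * (a powr (2 * r - 3) * tau^3))"
proof -
  have S: "c0_semigroup S" using gen by (simp add: generates_def)
  define w where "w = h2 (a powr r)"
  define q where "q = (s powr r - (a + c1 * tau) powr r) * (s powr r - (a + c2 * tau) powr r)"
  define P where "P = \<Delta>^2 * (((s - a) / tau - c1) * ((s - a) / tau - c2))"
  define \<sigma> where "\<sigma> = a + tau - s"
  have \<sigma>: "0 \<le> \<sigma>" "\<sigma> \<le> tau" using s by (auto simp: \<sigma>_def)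
  define E where "E = interp_residual h r c1 c2 tau a s - (q / 2) *\<^sub>R w"
  have eq: "S \<sigma> (interp_residual h r c1 c2 tau a s) - (P / 2) *\<^sub>R w
      = S \<sigma> E + (q / 2) *\<^sub>R (S \<sigma> w - w) + ((q - P) / 2) *\<^sub>R w"
    using c0_semigroup_bounded_linear[OF S \<sigma>(1)]
    by (simp add: E_def linear_simps algebra_simps diff_divide_distrib scaleR_diff_left)
  have "norm (S \<sigma> E) \<le> M * norm E" using M(1) \<sigma> tau by auto
  also have "\<dots> \<le> M * ((2 + 2 * (2 / \<bar>c2 - c1\<bar>)) * (K3 * \<Delta>^3))"
    using interp_residual_quadratic_approx[OF tau(1,3) r c d1 d2 d3 K3 s] M(2)
    unfolding E_def q_def w_def \<Delta>_def by (rule mult_left_mono)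
  finally have b1: "norm (S \<sigma> E) \<le> M * ((2 + 2 * (2 / \<bar>c2 - c1\<bar>)) * (K3 * \<Delta>^3))" .
  have b2: "norm ((q / 2) *\<^sub>R (S \<sigma> w - w)) \<le> \<Delta>^2 / 2 * (M * KA * tau)"
  proof -
    have q: "\<bar>q\<bar> \<le> \<Delta>^2"
      unfolding q_def \<Delta>_def by (rule node_product_abs_le) (use tau r c s in auto)
    have "norm (S \<sigma> w - w) \<le> M * norm (A w) * \<sigma>"
      unfolding w_def by (rule generator_semigroup_diff_bound[OF gen M(1) dom]) (use \<sigma> tau in auto)
    also have "\<dots> \<le> M * KA * tau"
      using \<sigma> M(2) KA[of "a powr r"] unfolding w_def mult.assoc
      by (intro mult_left_mono mult_mono) (auto intro: order_trans[OF norm_ge_zero])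
    finally show ?thesis using q by (simp add: mult_mono)
  qed
  have b3: "norm (((q - P) / 2) *\<^sub>R w) \<le> K2 / 2 * (8 * (a powr (2 * r - 3) * tau^3))"
  proof -
    have "\<bar>q - P\<bar> \<le> 8 * (a powr (2 * r - 3) * tau^3)"
      unfolding q_def P_def \<Delta>_def by (rule node_product_approx) (use tau r c s in auto)
    then have "\<bar>q - P\<bar> / 2 * norm w \<le> (8 * (a powr (2 * r - 3) * tau^3)) / 2 * K2"
      using K2[of "a powr r"] tau by (intro mult_mono) (auto simp: w_def mult_ac)
    then show ?thesis by (simp add: mult_ac)
  qed
  show ?thesis
    unfolding \<sigma>_def[symmetric] P_def[symmetric] w_def[symmetric] eq
    using b1 b2 b3 norm_triangle_ineq[of "S \<sigma> E + (q / 2) *\<^sub>R (S \<sigma> w - w)" "((q - P) / 2) *\<^sub>R w"]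
      norm_triangle_ineq[of "S \<sigma> E" "(q / 2) *\<^sub>R (S \<sigma> w - w)"]
    by linarith
qed

lemma local_defect_bound:
  fixes S :: "real \<Rightarrow> 'a::banach \<Rightarrow> 'a" and h h1 h2 h3 :: "real \<Rightarrow> 'a"
  assumes gen: "generates A D S" and M: "\<forall>t\<in>{0..L}. \<forall>x. norm (S t x) \<le> M * norm x" "M \<ge> 0"
    and tau: "0 < tau" "tau < L" "tau \<le> a" and r: "0 < r" "r < 1"
    and c: "c1 \<in> {0..1}" "c2 \<in> {0..1}" "c1 \<noteq> c2" and cc: "1/3 - (c1 + c2) / 2 + c1 * c2 = 0"
    and d1: "\<And>x. x \<ge> 0 \<Longrightarrow> (h has_vector_derivative h1 x) (at x within {0..})"
    and d2: "\<And>x. x \<ge> 0 \<Longrightarrow> (h1 has_vector_derivative h2 x) (at x within {0..})"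
    and d3: "\<And>x. x \<ge> 0 \<Longrightarrow> (h2 has_vector_derivative h3 x) (at x within {0..})"
    and K2: "\<And>x. x \<ge> 0 \<Longrightarrow> norm (h2 x) \<le> K2"
    and K3: "\<And>x. x \<ge> 0 \<Longrightarrow> norm (h3 x) \<le> K3"
    and KA: "\<And>x. x \<ge> 0 \<Longrightarrow> norm (A (h2 x)) \<le> KA"
    and dom: "\<And>x. x \<ge> 0 \<Longrightarrow> h2 x \<in> D"
  defines "\<Delta> \<equiv> r * a powr (r - 1) * tau"
  shows "norm (local_defect S h r c1 c2 tau a)
         \<le> tau * (M * ((2 + 2 * (2 / \<bar>c2 - c1\<bar>)) * (K3 * \<Delta>^3)) + \<Delta>^2 / 2 * (M * KA * tau)
                  + K2 / 2 * (8 * (a powr (2 * r - 3) * tau^3)))"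
proof -
  have S: "c0_semigroup S" using gen by (simp add: generates_def)
  define B where "B = M * ((2 + 2 * (2 / \<bar>c2 - c1\<bar>)) * (K3 * \<Delta>^3)) + \<Delta>^2 / 2 * (M * KA * tau)
                  + K2 / 2 * (8 * (a powr (2 * r - 3) * tau^3))"
  define P where "P s = (\<Delta>^2 * (((s - a) / tau - c1) * ((s - a) / tau - c2)) / 2) *\<^sub>R h2 (a powr r)" for s
  have P: "(P has_integral 0) {a..a+tau}"
  proof -
    have "((\<lambda>s. \<Delta>^2 * (((s - a) / tau - c1) * ((s - a) / tau - c2)) / 2) has_integral 0) {a..a+tau}"
      using has_integral_mult_left[OF node_polynomial_has_integral_0[OF tau(1) cc, of a], where c = "\<Delta>^2 / 2"]
      by (simp add: mult_ac)
    from has_integral_scaleR_left[OF this, where c = "h2 (a powr r)"] show ?thesis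
      by (simp add: P_def[abs_def])
  qed
  have E: "((\<lambda>s. S (a + tau - s) (interp_residual h r c1 c2 tau a s))
      has_integral local_defect S h r c1 c2 tau a) {a..a+tau}"
    unfolding local_defect_def using tau continuous_on_atLeast_of_has_vector_derivative[OF d1]
    by (intro integrable_integral integrable_continuous_real continuous_on_propagated_interp_residual[OF S _ r(1)])
       auto
  have hI: "((\<lambda>s. S (a + tau - s) (interp_residual h r c1 c2 tau a s) - P s)
      has_integral local_defect S h r c1 c2 tau a) (cbox a (a + tau))"
    using has_integral_diff[OF E P] by simp
  have bnd: "norm (S (a + tau - s) (interp_residual h r c1 c2 tau a s) - P s) \<le> B"
    if "s \<in> cbox a (a + tau)" for s
    unfolding P_def B_def \<Delta>_def
    by (rule propagated_interp_residual_approx[OF gen M tau r c d1 d2 d3 K2 K3 KA dom]) (use that in auto)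
  have "0 \<le> B"
    using bnd[of a] tau by (auto intro: order_trans[OF norm_ge_zero])
  from has_integral_bound[OF this hI bnd] show ?thesis
    using tau by (simp add: B_def mult.commute)
qed

lemma local_defect_bound_le_powr:
  fixes a tau T r M rho K2 K3 KA :: real
  assumes tau: "0 < tau" "tau \<le> a" "a \<le> T" and r: "0 < r" "r < 1"
    and nn: "M \<ge> 0" "rho \<ge> 0" "K2 \<ge> 0" "K3 \<ge> 0" "KA \<ge> 0"
  shows "tau * (M * ((2 + 2 * rho) * (K3 * (r * a powr (r - 1) * tau)^3))
                  + (r * a powr (r - 1) * tau)^2 / 2 * (M * KA * tau)
                  + K2 / 2 * (8 * (a powr (2 * r - 3) * tau^3)))
         \<le> (M * (2 + 2 * rho) * K3 * T powr r + M * KA * T / 2 + 4 * K2) * (tau^4 * a powr (2 * r - 3))"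
proof -
  have a0: "a > 0" using tau by simp
  define Y where "Y = tau^4 * a powr (2 * r - 3)"
  have Y0: "Y \<ge> 0" by (simp add: Y_def)
  have "tau * (M * ((2 + 2 * rho) * (K3 * (r * a powr (r - 1) * tau)^3)))
      = M * (2 + 2 * rho) * K3 * (r^3 * a powr r) * Y"
    unfolding power_mult_distrib powr_local_defect_exponents[OF a0] Y_def by (simp add: eval_nat_numeral mult_ac)
  also have "\<dots> \<le> M * (2 + 2 * rho) * K3 * T powr r * Y"
  proof -
    have "r^3 * a powr r \<le> 1 * T powr r"
      using r tau a0 by (intro mult_mono power_le_one powr_mono2) auto
    then show ?thesis using nn Y0 by (simp add: mult_left_mono mult_right_mono)
  qed
  finally have t1: "tau * (M * ((2 + 2 * rho) * (K3 * (r * a powr (r - 1) * tau)^3)))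
      \<le> M * (2 + 2 * rho) * K3 * T powr r * Y" .
  have "tau * ((r * a powr (r - 1) * tau)^2 / 2 * (M * KA * tau)) = M * KA * (r^2 * a) * Y / 2"
    unfolding power_mult_distrib powr_local_defect_exponents[OF a0] Y_def by (simp add: eval_nat_numeral mult_ac)
  also have "\<dots> \<le> M * KA * T * Y / 2"
  proof -
    have "r^2 * a \<le> 1 * T" using r tau by (intro mult_mono power_le_one) auto
    then show ?thesis using nn Y0 by (simp add: mult_left_mono mult_right_mono)
  qed
  finally have t2: "tau * ((r * a powr (r - 1) * tau)^2 / 2 * (M * KA * tau)) \<le> M * KA * T * Y / 2" .
  have t3: "tau * (K2 / 2 * (8 * (a powr (2 * r - 3) * tau^3))) = 4 * K2 * Y"
    unfolding powr_local_defect_exponents[OF a0] Y_def by (simp add: eval_nat_numeral mult_ac)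
  have "tau * (M * ((2 + 2 * rho) * (K3 * (r * a powr (r - 1) * tau)^3))
                  + (r * a powr (r - 1) * tau)^2 / 2 * (M * KA * tau)
                  + K2 / 2 * (8 * (a powr (2 * r - 3) * tau^3)))
      \<le> M * (2 + 2 * rho) * K3 * T powr r * Y + M * KA * T * Y / 2 + 4 * K2 * Y"
    unfolding distrib_left[of tau] using t1 t2 t3 by linarith
  also have "\<dots> = (M * (2 + 2 * rho) * K3 * T powr r + M * KA * T / 2 + 4 * K2) * Y"
    by (simp add: algebra_simps)
  finally show ?thesis unfolding Y_def .
qed

lemma step_powr_eq:
  fixes tau k r :: real
  assumes "tau > 0" "k > 0"
  shows "tau^4 * (k * tau) powr (2 * r - 3) = tau powr (1 + 2 * r) * k powr (2 * r - 3)"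
proof -
  have "tau^4 * tau powr (2 * r - 3) = tau powr (1 + 2 * r)"
    using assms powr_add[of tau 4 "2 * r - 3"] by (simp add: powr_realpow)
  then show ?thesis using assms by (simp add: powr_mult algebra_simps)
qed

lemma norm_c0_semigroup_sum_le:
  fixes S :: "real \<Rightarrow> 'a::banach \<Rightarrow> 'a" and d :: "nat \<Rightarrow> 'a"
  assumes M: "\<forall>t\<in>{0..T}. \<forall>x. norm (S t x) \<le> M * norm x" "M \<ge> 0"
    and tau: "0 < tau" "real n * tau \<le> T" and C: "0 \<le> C0" "0 \<le> C1" and q: "q < -1" and e: "e \<ge> 0"
    and d: "\<And>k. k < n \<Longrightarrow> norm (d k) \<le> e * (if k = 0 then C0 else C1 * real k powr q)"
  shows "norm (\<Sum>k<n. S (real (n - 1 - k) * tau) (d k)) \<le> M * (C0 + C1 * (\<Sum>k. real k powr q)) * e"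
proof -
  define w where "w k = (if k = 0 then C0 else C1 * real k powr q)" for k
  have "norm (\<Sum>k<n. S (real (n - 1 - k) * tau) (d k)) \<le> (\<Sum>k<n. M * (e * w k))"
  proof (rule order_trans[OF norm_sum sum_mono])
    fix k assume "k \<in> {..<n}"
    then have "norm (d k) \<le> e * w k" using d by (simp add: w_def)
    moreover have "real (n - 1 - k) * tau \<le> real n * tau" using tau by (intro mult_right_mono) auto
    then have "real (n - 1 - k) * tau \<in> {0..T}" using tau(1) order_trans[OF _ tau(2)] by simp
    ultimately show "norm (S (real (n - 1 - k) * tau) (d k)) \<le> M * (e * w k)"
      using M by (meson mult_left_mono order_trans)
  qed
  also have "\<dots> = M * e * (\<Sum>k<n. w k)" by (simp add: sum_distrib_left mult.assoc)
  also have "\<dots> \<le> M * e * (C0 + C1 * (\<Sum>k. real k powr q))"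
  proof (rule mult_left_mono)
    have "(\<Sum>k<n. w k) \<le> (\<Sum>k<n. (if k = 0 then C0 else 0) + C1 * real k powr q)"
      by (rule sum_mono) (use C in \<open>auto simp: w_def\<close>)
    also have "\<dots> \<le> C0 + C1 * (\<Sum>k. real k powr q)"
    proof -
      have "summable (\<lambda>k. real k powr q)" using summable_real_powr_iff q by simp
      then have "(\<Sum>k<n. real k powr q) \<le> (\<Sum>k. real k powr q)" "0 \<le> (\<Sum>k. real k powr q)"
        by (auto intro: sum_le_suminf suminf_nonneg)
      then show ?thesis using C by (simp add: sum.distrib sum_distrib_left[symmetric] sum.delta mult_left_mono)
    qed
    finally show "(\<Sum>k<n. w k) \<le> C0 + C1 * (\<Sum>k. real k powr q)" .
  qed (use M e in simp)
  finally show ?thesis by (simp add: mult_ac)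
qed

lemma local_defect_powr_bound:
  fixes S :: "real \<Rightarrow> 'a::banach \<Rightarrow> 'a" and h h1 h2 h3 :: "real \<Rightarrow> 'a"
  assumes gen: "generates A D S" and T: "T > 0" and r: "0 < r" "r < 1"
    and c: "c1 \<in> {0..1}" "c2 \<in> {0..1}" "c1 \<noteq> c2" and cc: "1/3 - (c1 + c2) / 2 + c1 * c2 = 0"
    and d1: "\<And>x. x \<ge> 0 \<Longrightarrow> (h has_vector_derivative h1 x) (at x within {0..})"
    and d2: "\<And>x. x \<ge> 0 \<Longrightarrow> (h1 has_vector_derivative h2 x) (at x within {0..})"
    and d3: "\<And>x. x \<ge> 0 \<Longrightarrow> (h2 has_vector_derivative h3 x) (at x within {0..})"
    and b: "bounded (h2 ` {0..})" "bounded (h3 ` {0..})" "bounded ((\<lambda>x. A (h2 x)) ` {0..})"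
    and dom: "\<And>x. x \<ge> 0 \<Longrightarrow> h2 x \<in> D"
  shows "\<exists>C0 C1. 0 \<le> C0 \<and> 0 \<le> C1 \<and> (\<forall>tau k. 0 < tau \<longrightarrow> tau \<le> T \<longrightarrow> real k * tau \<le> T \<longrightarrow>
           norm (local_defect S h r c1 c2 tau (real k * tau))
           \<le> tau powr (1 + 2 * r) * (if k = 0 then C0 else C1 * real k powr (2 * r - 3)))"
proof -
  have S: "c0_semigroup S" using gen by (simp add: generates_def)
  obtain K2 K3 KA where K2: "\<And>x. x \<ge> 0 \<Longrightarrow> norm (h2 x) \<le> K2"
    and K3: "\<And>x. x \<ge> 0 \<Longrightarrow> norm (h3 x) \<le> K3" and KA: "\<And>x. x \<ge> 0 \<Longrightarrow> norm (A (h2 x)) \<le> KA"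
    using b unfolding bounded_iff by (metis atLeast_iff image_eqI)
  have K: "K2 \<ge> 0" "K3 \<ge> 0" "KA \<ge> 0"
    using K2[of 0] K3[of 0] KA[of 0] by (auto intro: order_trans[OF norm_ge_zero])
  obtain M where M: "\<forall>t\<in>{0..T+1}. \<forall>x. norm (S t x) \<le> M * norm x" "M > 0"
    using c0_semigroup_uniform_bound[OF S, of "T + 1"] T by auto
  define C0 where "C0 = M * (2 + 2 * (1 / \<bar>c2 powr r - c1 powr r\<bar>)) * K2"
  define C1 where "C1 = M * (2 + 2 * (2 / \<bar>c2 - c1\<bar>)) * K3 * T powr r + M * KA * T / 2 + 4 * K2"
  have first: "norm (local_defect S h r c1 c2 tau 0) \<le> tau powr (1 + 2 * r) * C0"
    if tau: "0 < tau" "tau \<le> T" for tau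
  proof -
    have "norm (local_defect S h r c1 c2 tau 0)
        \<le> tau * (M * ((2 + 2 * (1 / \<bar>c2 powr r - c1 powr r\<bar>)) * (K2 * (tau powr r)^2)))"
      using local_defect_first_step_bound[OF S M(1) _ _ _ r(1) c d1 d2 K2] M(2) tau by simp
    also have "\<dots> = tau * (tau powr r)^2 * C0" by (simp add: C0_def mult_ac)
    also have "tau * (tau powr r)^2 = tau powr (1 + 2 * r)"
      using tau powr_add[of tau 1 "2 * r"] by (simp add: power2_eq_square powr_add[symmetric])
    finally show ?thesis .
  qed
  have later: "norm (local_defect S h r c1 c2 tau (real k * tau))
      \<le> tau powr (1 + 2 * r) * (C1 * real k powr (2 * r - 3))"
    if tau: "0 < tau" "tau \<le> T" "real k * tau \<le> T" and k: "k > 0" for tau k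
  proof -
    have "tau \<le> real k * tau" using k tau by simp
    with local_defect_bound[OF gen M(1) _ tau(1) _ _ r c cc d1 d2 d3 K2 K3 KA dom] M(2) tau
    have "norm (local_defect S h r c1 c2 tau (real k * tau))
      \<le> tau * (M * ((2 + 2 * (2 / \<bar>c2 - c1\<bar>)) * (K3 * (r * (real k * tau) powr (r - 1) * tau)^3))
          + (r * (real k * tau) powr (r - 1) * tau)^2 / 2 * (M * KA * tau)
          + K2 / 2 * (8 * ((real k * tau) powr (2 * r - 3) * tau^3)))"
      by simp
    also have "\<dots> \<le> C1 * (tau^4 * (real k * tau) powr (2 * r - 3))"
      unfolding C1_def using M(2) K tau \<open>tau \<le> real k * tau\<close>
      by (intro local_defect_bound_le_powr) (auto simp: r)
    finally show ?thesis
      using step_powr_eq[OF tau(1), of "real k" r] k by (simp add: mult_ac)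
  qed
  have "0 \<le> C0" "0 \<le> C1" using M(2) K T by (simp_all add: C0_def C1_def)
  then show ?thesis using first later by (intro exI[of _ C0] exI[of _ C1]) auto
qed

theorem theorem3:
  fixes A :: "'a::banach \<Rightarrow> 'a" and D :: "'a set" and S :: "real \<Rightarrow> 'a \<Rightarrow> 'a"
    and h h1 h2 h3 :: "real \<Rightarrow> 'a" and y0 :: 'a and T r c1 c2 :: real
  assumes gen: "generates A D S"
    and T: "T > 0" and r: "0 < r" "r < 1"
    and c: "c1 \<in> {0..1}" "c2 \<in> {0..1}" "c1 \<noteq> c2"
           "1/3 - (c1 + c2) / 2 + c1 * c2 = 0"
    and d1: "\<And>x. x \<ge> 0 \<Longrightarrow> (h has_vector_derivative h1 x) (at x within {0..})"
    and d2: "\<And>x. x \<ge> 0 \<Longrightarrow> (h1 has_vector_derivative h2 x) (at x within {0..})"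
    and d3: "\<And>x. x \<ge> 0 \<Longrightarrow> (h2 has_vector_derivative h3 x) (at x within {0..})"
    and b: "bounded (h1 ` {0..})" "bounded (h2 ` {0..})" "bounded (h3 ` {0..})"
    and dom: "\<And>x. x \<ge> 0 \<Longrightarrow> h2 x \<in> D"
    and bA: "bounded ((\<lambda>x. A (h2 x)) ` {0..})"
  shows "\<exists>C. \<forall>N::nat. N \<ge> 1 \<longrightarrow> (\<forall>n\<le>N.
           norm (mild_sol S h r y0 (real n * (T / real N))
                 - eqrf2 S h r c1 c2 (T / real N) y0 n)
           \<le> C * (T / real N) powr (1 + 2 * r))"
proof -
  have S: "c0_semigroup S" using gen by (simp add: generates_def)
  have hc: "continuous_on {0..} h" by (rule continuous_on_atLeast_of_has_vector_derivative[OF d1])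
  obtain C0 C1 where C: "0 \<le> C0" "0 \<le> C1" and local:
    "\<And>tau k. 0 < tau \<Longrightarrow> tau \<le> T \<Longrightarrow> real k * tau \<le> T \<Longrightarrow>
       norm (local_defect S h r c1 c2 tau (real k * tau))
       \<le> tau powr (1 + 2 * r) * (if k = 0 then C0 else C1 * real k powr (2 * r - 3))"
    using local_defect_powr_bound[OF gen T r c d1 d2 d3 b(2,3) bA dom] by blast
  obtain M where M: "\<forall>t\<in>{0..T}. \<forall>x. norm (S t x) \<le> M * norm x" "M > 0"
    using c0_semigroup_uniform_bound[OF S, of T] T by auto
  show ?thesis
  proof (intro exI allI impI)
    fix N n :: nat assume N: "N \<ge> 1" and n: "n \<le> N"
    define tau where "tau = T / real N"
    have tau: "0 < tau" "tau \<le> T" "real N * tau = T"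
      using T N by (auto simp: tau_def field_simps)
    have "real k * tau \<le> T" if "k \<le> N" for k
      using that tau by (metis mult_right_mono of_nat_le_iff less_imp_le)
    then have "norm (mild_sol S h r y0 (real n * tau) - eqrf2 S h r c1 c2 tau y0 n)
        \<le> M * (C0 + C1 * (\<Sum>k. real k powr (2 * r - 3))) * tau powr (1 + 2 * r)"
      unfolding eqrf2_error_sum[OF S tau(1) r(1) hc]
      using M C r n tau local by (intro norm_c0_semigroup_sum_le) auto
    then show "norm (mild_sol S h r y0 (real n * (T / real N)) - eqrf2 S h r c1 c2 (T / real N) y0 n)
        \<le> M * (C0 + C1 * (\<Sum>k. real k powr (2 * r - 3))) * (T / real N) powr (1 + 2 * r)"
      unfolding tau_def .
  qed
qed

end
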